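(* In the parametrized changepoint model of the context, assume $f(y\mid x;\theta^f)=\eta'(\theta^f)^tT'(x,y)+A'(\theta^f)$ with functions $\eta':\Theta^f\to\mathbb R^v$, $A':\Theta^f\to\mathbb R$ and measurable $T':\mathbb X\times\mathbb Y\to\mathbb R^v$. For $0<i\le n$, $0\le j\le i$ and $\ell=1,\dots,v$ let $$o^\ell_{ji}=\int\sum_{k=\max(j,1)}^iT'_\ell(x,y_k)\,H_{ji}(dx),$$ where $H_{ji}$ is computed under $\theta_{old}$. Then any $\theta^f\in\Theta^f$ maximizing $$nA'(\theta^f)+\sum_{\ell=1}^v\eta'_\ell(\theta^f)\Big(\sum_{i=1}^{n-1}\sum_{j=0}^i\tilde c_{ji}\,\tilde q_{i+1}\,o^\ell_{ji}+\sum_{j=0}^n\tilde c_{jn}\,o^\ell_{jn}\Big)$$ is a maximizer of $\theta^f\mapsto\mathbb E\big[\sum_{i=1}^nf(y_i\mid X_i;\theta^f)\mid Y_{1:n}=y_{1:n};\theta_{old}\big]$, i.e. a candidate for the new value $\theta^f_{new}$ in the EM step.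
   Context: Model: fix $n\ge1$ and data $y_1,\dots,y_n$; $(\mathbb X,\mathcal X)$, $(\mathbb Y,\mathcal Y)$ standard Borel, $\psi$ $\sigma$-finite on $\mathbb Y$, $\mathcal J$ a probability measure on $\mathbb X$, $q_{ji}\in[0,1]$ for $0\le j<i\le n$. Random variables $C_i\in\{0,\dots,i\}$, $X_i\in\mathbb X$, $Y_i\in\mathbb Y$: $P(C_1=0)=q_{01}$, $P(C_1=1)=1-q_{01}$; for $i\ge2$, $C_i$ depends on the past only through $C_{i-1}$ with $P(C_i=j\mid C_{i-1}=j)=q_{ji}$, $P(C_i=i\mid C_{i-1}=j)=1-q_{ji}$; $X_1\sim\mathcal J$; for $i\ge2$, $X_i\sim\mathcal J$ (fresh) if $C_i=i$ and $X_i=X_{i-1}$ if $C_i<i$; $Y_i$ depends on all other variables only through $X_i$, with density $p(Y_i=y\mid X_i=x;\theta^f)$ w.r.t. $\psi$, of the same form for all $i$, depending on a parameter $\theta^f\in\Theta^f$ that appears nowhere else; $f(y\mid x;\theta^f)=\ln p(Y_i=y\mid X_i=x;\theta^f)$. Assume $\int\prod_{\ell=j}^ip(Y_\ell=y_\ell\mid X_\ell=x)\mathcal J(dx)>0$ for $0<j\le i\le n$. EM setting: $\theta_{old}$ is the current value of all parameters; all posterior quantities below are computed in the model with $\theta_{old}$: $H_{ji}=P(X_i\in\cdot\mid C_i=j,Y_{1:i}=y_{1:i})$; $\tilde c_{ji}=P(C_i=j\mid C_{i+1}=i+1,Y_{1:i}=y_{1:i})$ for $0<i<n$ and $\tilde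 c_{jn}=P(C_n=j\mid Y_{1:n}=y_{1:n})$; $\tilde q_i=P(C_i=i\mid Y_{1:n}=y_{1:n})$. Expectations are assumed finite. *)

theory Defs
  imports "HOL-Probability.Probability"
begin

text \<open>Changepoint paths c (c i = C_i for 1 <= i <= n), normalised by c i = 0 outside {1..n}.\<close>
definition cp_paths :: "nat \<Rightarrow> (nat \<Rightarrow> nat) set" where
  "cp_paths n = {c. (\<forall>i. c i \<le> i) \<and> (\<forall>i. i \<notin> {1..n} \<longrightarrow> c i = 0)}"

text \<open>P(C_i = b | C_(i-1) = a); for i = 1 with the convention C_0 = 0 this gives
  P(C_1 = 0) = q 0 1 and P(C_1 = 1) = 1 - q 0 1.\<close>
definition cp_trans :: "(nat \<Rightarrow> nat \<Rightarrow> real) \<Rightarrow> nat \<Rightarrow> nat \<Rightarrow> nat \<Rightarrow> real" where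
  "cp_trans q i a b = (if b = a then q a i else if b = i then 1 - q a i else 0)"

definition cp_path_prob :: "(nat \<Rightarrow> nat \<Rightarrow> real) \<Rightarrow> nat \<Rightarrow> (nat \<Rightarrow> nat) \<Rightarrow> real" where
  "cp_path_prob q n c = (\<Prod>i\<in>{1..n}. cp_trans q i (c (i - 1)) (c i))"

text \<open>Joint prior law of (C_1..C_n, fresh draws Z_1..Z_n iid J).  X_i = Z_(max C_i 1),
  i.e. X_i is the fresh draw of the segment containing i.\<close>
definition cp_prior :: "(nat \<Rightarrow> nat \<Rightarrow> real) \<Rightarrow> 'x measure \<Rightarrow> nat \<Rightarrow> ((nat \<Rightarrow> nat) \<times> (nat \<Rightarrow> 'x)) measure" where
  "cp_prior q J n =
     density (count_space (cp_paths n)) (\<lambda>c. ennreal (cp_path_prob q n c))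
       \<Otimes>\<^sub>M PiM {1..n} (\<lambda>_. J)"

definition cpC :: "nat \<Rightarrow> (nat \<Rightarrow> nat) \<times> (nat \<Rightarrow> 'x) \<Rightarrow> nat" where
  "cpC i \<omega> = fst \<omega> i"

definition cpX :: "nat \<Rightarrow> (nat \<Rightarrow> nat) \<times> (nat \<Rightarrow> 'x) \<Rightarrow> 'x" where
  "cpX i \<omega> = snd \<omega> (max (fst \<omega> i) 1)"

text \<open>Likelihood of Y_(1:i) = y_(1:i) given the latent variables (p y x = p(Y=y | X=x)).\<close>
definition cp_lik :: "('y \<Rightarrow> 'x \<Rightarrow> real) \<Rightarrow> (nat \<Rightarrow> 'y) \<Rightarrow> nat \<Rightarrow> (nat \<Rightarrow> nat) \<times> (nat \<Rightarrow> 'x) \<Rightarrow> real" where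
  "cp_lik p y i \<omega> = (\<Prod>k\<in>{1..i}. p (y k) (cpX k \<omega>))"

definition cond_measure :: "'a measure \<Rightarrow> 'a set \<Rightarrow> 'a measure" where
  "cond_measure M B = density M (\<lambda>\<omega>. indicator B \<omega> / emeasure M B)"

definition cp_post ::
  "(nat \<Rightarrow> nat \<Rightarrow> real) \<Rightarrow> 'x measure \<Rightarrow> ('y \<Rightarrow> 'x \<Rightarrow> real) \<Rightarrow> (nat \<Rightarrow> 'y) \<Rightarrow> nat \<Rightarrow> nat
     \<Rightarrow> ((nat \<Rightarrow> nat) \<times> (nat \<Rightarrow> 'x)) measure" where
  "cp_post q J p y n i =
     (let W = density (cp_prior q J n) (\<lambda>\<omega>. ennreal (cp_lik p y i \<omega>)) in cond_measure W (space W))"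

definition cp_event :: "(nat \<Rightarrow> nat \<Rightarrow> real) \<Rightarrow> 'x measure \<Rightarrow> nat \<Rightarrow> nat \<Rightarrow> nat
     \<Rightarrow> ((nat \<Rightarrow> nat) \<times> (nat \<Rightarrow> 'x)) set" where
  "cp_event q J n i j = {\<omega> \<in> space (cp_prior q J n). cpC i \<omega> = j}"

text \<open>H_ji = P(X_i \<in> . | C_i = j, Y_(1:i) = y_(1:i)).\<close>
definition cp_H :: "(nat \<Rightarrow> nat \<Rightarrow> real) \<Rightarrow> 'x measure \<Rightarrow> ('y \<Rightarrow> 'x \<Rightarrow> real) \<Rightarrow> (nat \<Rightarrow> 'y) \<Rightarrow> nat
     \<Rightarrow> nat \<Rightarrow> nat \<Rightarrow> 'x measure" where
  "cp_H q J p y n j i = distr (cond_measure (cp_post q J p y n i) (cp_event q J n i j)) J (cpX i)"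

text \<open>c~_ji = P(C_i = j | C_(i+1) = i+1, Y_(1:i) = y_(1:i)) for i < n,
  c~_jn = P(C_n = j | Y_(1:n) = y_(1:n)).\<close>
definition cp_ctil :: "(nat \<Rightarrow> nat \<Rightarrow> real) \<Rightarrow> 'x measure \<Rightarrow> ('y \<Rightarrow> 'x \<Rightarrow> real) \<Rightarrow> (nat \<Rightarrow> 'y) \<Rightarrow> nat
     \<Rightarrow> nat \<Rightarrow> nat \<Rightarrow> real" where
  "cp_ctil q J p y n j i =
     (if i < n then measure (cond_measure (cp_post q J p y n i) (cp_event q J n (i + 1) (i + 1))) (cp_event q J n i j)
      else measure (cp_post q J p y n n) (cp_event q J n n j))"

text \<open>q~_i = P(C_i = i | Y_(1:n) = y_(1:n)).\<close>
definition cp_qtil :: "(nat \<Rightarrow> nat \<Rightarrow> real) \<Rightarrow> 'x measure \<Rightarrow> ('y \<Rightarrow> 'x \<Rightarrow> real) \<Rightarrow> (nat \<Rightarrow> 'y) \<Rightarrow> nat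
     \<Rightarrow> nat \<Rightarrow> real" where
  "cp_qtil q J p y n i = measure (cp_post q J p y n n) (cp_event q J n i i)"

end

theory Submission
  imports Defs
begin

text \<open>Since f is affine in the statistics T, the EM objective is
  n A(\<theta>) + \<Sum>l \<eta>_l(\<theta>) S_l with S_l = \<Sum>i E[T_l(X_i, y_i) | Y_(1:n)], so it agrees with the
  surrogate objective as soon as S_l equals the bracket multiplying \<eta>_l(\<theta>) there.  To see this,
  group the sum over i by the segments of the changepoint path: a segment ends at i < n with
  start j exactly when C_i = j and C_(i+1) = i+1, and X is constant on it.  A restart at i+1
  renews the process, so given C_(i+1) = i+1 the observations after i carry no information
  about (C_i, X_i).  Hence P(C_i = j, C_(i+1) = i+1 | Y_(1:n)) = c~_ji q~_(i+1), and on this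
  event X_i has the law H_ji; the last segment, ending at n, is handled directly.\<close>

section \<open>Measure-theoretic preliminaries\<close>

lemma cond_measure_eq_density:
  assumes B: "B \<in> sets M" and pos: "0 < emeasure M B" and fin: "emeasure M B < \<infinity>"
  shows "cond_measure M B = density M (\<lambda>\<omega>. ennreal (indicator B \<omega> / measure M B))"
proof -
  have e: "emeasure M B = ennreal (measure M B)" using fin by (simp add: emeasure_eq_ennreal_measure)
  have "0 < measure M B" using pos e by (simp add: measure_nonneg)
  then have "indicator B \<omega> / emeasure M B = ennreal (indicator B \<omega> / measure M B)" for \<omega>
    by (cases "\<omega> \<in> B") (simp_all add: e divide_ennreal[symmetric])
  then show ?thesis unfolding cond_measure_def by simp
qed

lemma cond_measure_null_set:
  assumes B: "B \<in> sets M" and null: "emeasure M B = 0"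
  shows "cond_measure M B = null_measure M"
proof (rule measure_eqI)
  fix A assume "A \<in> sets (cond_measure M B)"
  then have A: "A \<in> sets M" by (simp add: cond_measure_def)
  have "emeasure (cond_measure M B) A = (\<integral>\<^sup>+\<omega>. (indicator B \<omega> / emeasure M B) * indicator A \<omega> \<partial>M)"
    unfolding cond_measure_def using A B by (subst emeasure_density) auto
  also have "\<dots> \<le> (\<integral>\<^sup>+\<omega>. top * indicator B \<omega> \<partial>M)"
    by (intro nn_integral_mono) (auto simp: null indicator_def)
  also have "\<dots> = 0" using null B by (simp add: nn_integral_cmult_indicator)
  finally show "emeasure (cond_measure M B) A = emeasure (null_measure M) A" by simp
qed (simp add: cond_measure_def)

lemma measure_cond_measure:
  assumes "prob_space M" and E: "E \<in> sets M" and F: "F \<in> sets M" and pos: "0 < measure M E"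
  shows "measure (cond_measure M E) F = measure M (F \<inter> E) / measure M E"
proof -
  interpret prob_space M by fact
  have "emeasure (cond_measure M E) F = (\<integral>\<^sup>+\<omega>. ennreal (indicator E \<omega> / measure M E) * indicator F \<omega> \<partial>M)"
    using E F pos
    by (subst cond_measure_eq_density) (auto simp: emeasure_eq_measure emeasure_density)
  also have "\<dots> = (\<integral>\<^sup>+\<omega>. ennreal (1 / measure M E) * indicator (F \<inter> E) \<omega> \<partial>M)"
    by (intro nn_integral_cong) (auto simp: indicator_def)
  also have "\<dots> = ennreal (measure M (F \<inter> E) / measure M E)"
    using E F pos by (simp add: nn_integral_cmult_indicator emeasure_eq_measure ennreal_mult[symmetric])
  finally show ?thesis unfolding measure_def using pos by (simp add: enn2real_ennreal)
qed

lemma measure_mult_integral_distr_cond_measure: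
  fixes g :: "'b \<Rightarrow> real"
  assumes "prob_space M" and F: "F \<in> sets M" and X: "X \<in> measurable M N" and g: "g \<in> borel_measurable N"
  shows "measure M F * (\<integral>x. g x \<partial>distr (cond_measure M F) N X) = (\<integral>\<omega>. indicator F \<omega> * g (X \<omega>) \<partial>M)"
proof (cases "emeasure M F = 0")
  case True
  then have "AE \<omega> in M. \<omega> \<notin> F" using F by (intro AE_not_in null_setsI) auto
  then have "(\<integral>\<omega>. indicator F \<omega> * g (X \<omega>) \<partial>M) = (\<integral>\<omega>. 0 \<partial>M)"
    by (intro integral_cong_AE) (use X g F in auto)
  then show ?thesis using True by (simp add: measure_def)
next
  case False
  interpret prob_space M by fact
  have pos: "0 < measure M F" using False by (simp add: emeasure_eq_measure zero_less_measure_iff)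
  let ?D = "density M (\<lambda>\<omega>. ennreal (indicator F \<omega> / measure M F))"
  have "cond_measure M F = ?D"
    using False by (intro cond_measure_eq_density F) (simp_all add: zero_less_iff_neq_zero less_top[symmetric])
  then have "(\<integral>x. g x \<partial>distr (cond_measure M F) N X) = (\<integral>x. g x \<partial>distr ?D N X)"
    by simp
  also have "\<dots> = (\<integral>\<omega>. g (X \<omega>) \<partial>?D)"
    using X g by (intro integral_distr) simp_all
  also have "\<dots> = (\<integral>\<omega>. (1 / measure M F) * (indicator F \<omega> * g (X \<omega>)) \<partial>M)"
    using X g F by (subst integral_density) (auto intro!: Bochner_Integration.integral_cong)
  also have "\<dots> = (1 / measure M F) * (\<integral>\<omega>. indicator F \<omega> * g (X \<omega>) \<partial>M)"
    by (rule integral_mult_right_zero)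
  finally show ?thesis using pos by simp
qed

text \<open>The hypothesis says that the images under X of the two weighted measures are proportional.\<close>
lemma integral_weighted_proportional:
  fixes g :: "'b \<Rightarrow> real"
  assumes sets: "sets M = sets M'" and X: "X \<in> measurable M N"
    and D: "D \<in> borel_measurable M" and D': "D' \<in> borel_measurable M"
    and D_nonneg: "\<And>\<omega>. 0 \<le> D \<omega>" and D'_nonneg: "\<And>\<omega>. 0 \<le> D' \<omega>" and k: "0 \<le> k"
    and H: "\<And>H. H \<in> borel_measurable N \<Longrightarrow>
      (\<integral>\<^sup>+\<omega>. ennreal (D \<omega>) * H (X \<omega>) \<partial>M) = ennreal k * (\<integral>\<^sup>+\<omega>. ennreal (D' \<omega>) * H (X \<omega>) \<partial>M')"
    and g: "g \<in> borel_measurable N"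
  shows "(\<integral>\<omega>. D \<omega> * g (X \<omega>) \<partial>M) = k * (\<integral>\<omega>. D' \<omega> * g (X \<omega>) \<partial>M')"
proof -
  have X': "X \<in> measurable M' N" and D'_M': "D' \<in> borel_measurable M'"
    using X D' sets by (simp_all cong: measurable_cong_sets)
  let ?I = "distr (density M (\<lambda>\<omega>. ennreal (D \<omega>))) N X"
  let ?I' = "distr (density M' (\<lambda>\<omega>. ennreal (D' \<omega>))) N X"
  have eq: "?I = density ?I' (\<lambda>_. ennreal k)"
  proof (rule measure_eqI)
    fix A assume "A \<in> sets ?I"
    then have A: "A \<in> sets N" by simp
    have Xd: "X \<in> measurable (density M (\<lambda>\<omega>. ennreal (D \<omega>))) N"
      and X'd: "X \<in> measurable (density M' (\<lambda>\<omega>. ennreal (D' \<omega>))) N"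
      using X X' by (simp_all cong: measurable_cong_sets)
    have "emeasure ?I A = (\<integral>\<^sup>+\<omega>. indicator A (X \<omega>) \<partial>density M (\<lambda>\<omega>. ennreal (D \<omega>)))"
      using A Xd by (simp add: nn_integral_distr flip: nn_integral_indicator)
    also have "\<dots> = (\<integral>\<^sup>+\<omega>. ennreal (D \<omega>) * indicator A (X \<omega>) \<partial>M)"
      using D X A by (intro nn_integral_density) auto
    also have "\<dots> = ennreal k * (\<integral>\<^sup>+\<omega>. ennreal (D' \<omega>) * indicator A (X \<omega>) \<partial>M')"
      by (rule H) (use A in simp)
    also have "(\<integral>\<^sup>+\<omega>. ennreal (D' \<omega>) * indicator A (X \<omega>) \<partial>M')
        = (\<integral>\<^sup>+\<omega>. indicator A (X \<omega>) \<partial>density M' (\<lambda>\<omega>. ennreal (D' \<omega>)))"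
      using D'_M' X' A by (intro nn_integral_density[symmetric]) auto
    also have "\<dots> = emeasure ?I' A"
      using A X'd by (simp add: nn_integral_distr flip: nn_integral_indicator)
    also have "ennreal k * \<dots> = emeasure (density ?I' (\<lambda>_. ennreal k)) A"
      using A by (simp add: emeasure_density nn_integral_cmult_indicator)
    finally show "emeasure ?I A = emeasure (density ?I' (\<lambda>_. ennreal k)) A" .
  qed simp
  have "(\<integral>\<omega>. D \<omega> * g (X \<omega>) \<partial>M) = (\<integral>x. g x \<partial>?I)"
    using D X g D_nonneg by (simp add: integral_density integral_distr)
  also have "\<dots> = k * (\<integral>x. g x \<partial>?I')"
    unfolding eq using g k by (simp add: integral_density)
  also have "(\<integral>x. g x \<partial>?I') = (\<integral>\<omega>. D' \<omega> * g (X \<omega>) \<partial>M')"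
    using D'_M' X' g D'_nonneg by (simp add: integral_density integral_distr)
  finally show ?thesis .
qed

lemma integral_affine_sum:
  fixes u :: "'i \<Rightarrow> 'k \<Rightarrow> 'a \<Rightarrow> real"
  assumes "prob_space M" and fin: "finite K" "finite L"
    and int: "\<And>l k. l \<in> L \<Longrightarrow> k \<in> K \<Longrightarrow> integrable M (u l k)"
  shows "(\<integral>\<omega>. (\<Sum>k\<in>K. (\<Sum>l\<in>L. a l * u l k \<omega>) + b) \<partial>M)
       = real (card K) * b + (\<Sum>l\<in>L. a l * (\<integral>\<omega>. (\<Sum>k\<in>K. u l k \<omega>) \<partial>M))"
proof -
  interpret prob_space M by fact
  have "(\<Sum>k\<in>K. (\<Sum>l\<in>L. a l * u l k \<omega>) + b) = (\<Sum>l\<in>L. a l * (\<Sum>k\<in>K. u l k \<omega>)) + real (card K) * b" for \<omega>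
    by (simp add: sum.distrib sum_distrib_left) (rule sum.swap)
  moreover have "integrable M (\<lambda>\<omega>. \<Sum>k\<in>K. u l k \<omega>)" if "l \<in> L" for l
    using int that by (intro Bochner_Integration.integrable_sum) auto
  ultimately show ?thesis
    by (simp add: Bochner_Integration.integral_add Bochner_Integration.integral_sum
        Bochner_Integration.integrable_sum prob_space)
qed

section \<open>Changepoint paths\<close>

text \<open>Index of the fresh draw used by an observation whose changepoint is t: X_i = Z_(seg_start C_i),
  the changepoint 0 standing for the initial segment, whose draw is Z_1.\<close>
definition seg_start :: "nat \<Rightarrow> nat" where
  "seg_start t = max t 1"

definition cp_valid :: "nat \<Rightarrow> (nat \<Rightarrow> nat) \<Rightarrow> bool" where
  "cp_valid n c \<longleftrightarrow> (\<forall>k\<in>{1..n}. c k = c (k - 1) \<or> c k = k)"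

definition path_splice :: "nat \<Rightarrow> (nat \<Rightarrow> nat) \<Rightarrow> (nat \<Rightarrow> nat) \<Rightarrow> nat \<Rightarrow> nat" where
  "path_splice i c c' k = (if k \<le> i then c k else c' k)"

lemma finite_cp_paths: "finite (cp_paths n)"
proof -
  let ?ext = "\<lambda>f k. if k \<in> {1..n} then f k else 0"
  have "cp_paths n \<subseteq> ?ext ` (PiE {1..n} (\<lambda>k. {0..k}))"
  proof
    fix c assume c: "c \<in> cp_paths n"
    then have "c = ?ext (restrict c {1..n})" and "restrict c {1..n} \<in> PiE {1..n} (\<lambda>k. {0..k})"
      by (auto simp: cp_paths_def)
    then show "c \<in> ?ext ` (PiE {1..n} (\<lambda>k. {0..k}))" by blast
  qed
  then show ?thesis by (rule finite_surj[rotated]) (intro finite_PiE; simp)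
qed

lemma cp_paths_le: "c \<in> cp_paths n \<Longrightarrow> c k \<le> k"
  by (simp add: cp_paths_def)

lemma seg_start_le: "c \<in> cp_paths n \<Longrightarrow> 1 \<le> k \<Longrightarrow> seg_start (c k) \<le> k"
  using cp_paths_le[of c n k] by (simp add: seg_start_def)

lemma seg_start_in: "c \<in> cp_paths n \<Longrightarrow> k \<in> {1..n} \<Longrightarrow> seg_start (c k) \<in> {1..n}"
  using seg_start_le[of c n k] by (auto simp: seg_start_def)

lemma cp_valid_if_path_prob_nonzero: "cp_path_prob q n c \<noteq> 0 \<Longrightarrow> cp_valid n c"
  unfolding cp_path_prob_def cp_valid_def cp_trans_def by (auto split: if_splits)

lemma cp_valid_mono:
  assumes "cp_valid n c" "\<forall>k. c k \<le> k" "a \<le> b" "b \<le> n"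
  shows "c a \<le> c b"
  using assms(3,4)
proof (induction b)
  case (Suc b)
  have "c b \<le> b" using assms(2) by blast
  then have "c b \<le> c (Suc b)"
    using assms(1) Suc.prems(2) unfolding cp_valid_def by force
  with Suc show ?case by (cases "a = Suc b") auto
qed simp

lemma cp_valid_restart:
  assumes "cp_valid n c" "\<forall>k. c k \<le> k" "k \<le> n" "c k = s" "1 \<le> s"
  shows "c s = s"
  using assms(3,4)
proof (induction k)
  case 0 then show ?case using assms(2)[rule_format, of 0] assms(5) by simp
next
  case (Suc k)
  show ?case
  proof (cases "c (Suc k) = Suc k")
    case False
    then have "c (Suc k) = c k" using assms(1) Suc.prems(1) unfolding cp_valid_def by force
    then show ?thesis using Suc by simp
  qed (use Suc in simp)
qed

lemma seg_start_eq_on_segment: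
  assumes v: "cp_valid n c" and cl: "\<forall>k. c k \<le> k" and i: "i \<le> n" and k: "seg_start (c i) \<le> k" "k \<le> i"
  shows "seg_start (c k) = seg_start (c i)"
proof (cases "c i = 0")
  case False
  then have "c (c i) = c i" using cp_valid_restart[OF v cl i refl] by simp
  moreover have "c (c i) \<le> c k" using cp_valid_mono[OF v cl] k i False by (simp add: seg_start_def)
  ultimately show ?thesis using cp_valid_mono[OF v cl k(2) i] by simp
qed (use cp_valid_mono[OF v cl k(2) i] in simp)

lemma segment_eq_interval:
  assumes v: "cp_valid n c" and cl: "\<forall>k. c k \<le> k" and m: "m \<le> n"
    and ne: "{k\<in>{1..m}. seg_start (c k) = s} \<noteq> {}"
  obtains e where "1 \<le> s" "s \<le> e" "e \<le> m" "{k\<in>{1..m}. seg_start (c k) = s} = {s..e}"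
proof -
  let ?F = "{k\<in>{1..m}. seg_start (c k) = s}"
  define e where "e = Max ?F"
  have eF: "e \<in> ?F" using ne unfolding e_def by (intro Max_in) auto
  have le: "s \<le> k" if "k \<in> ?F" for k
    using that cl[rule_format, of k] by (auto simp: seg_start_def)
  have "?F = {s..e}"
  proof
    show "?F \<subseteq> {s..e}" using le by (auto simp: e_def)
    show "{s..e} \<subseteq> ?F"
    proof
      fix k assume k: "k \<in> {s..e}"
      have "seg_start (c e) \<le> k" using eF k by simp
      then show "k \<in> ?F"
        using seg_start_eq_on_segment[OF v cl, of e k] eF k m le[OF eF]
        by (auto simp: seg_start_def)
    qed
  qed
  moreover have "1 \<le> s" "e \<le> m" using eF by (auto simp: seg_start_def)
  ultimately show thesis using le[OF eF] by (intro that)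
qed

text \<open>A segment ends at i < m exactly when C_(i+1) = i+1, and it then starts at seg_start C_i.\<close>
lemma sum_by_segments:
  fixes a :: "nat \<Rightarrow> real"
  assumes v: "cp_valid n c" and cl: "\<forall>k. c k \<le> k" and "1 \<le> m" "m \<le> n"
  shows "(\<Sum>i=1..m-1. if c (Suc i) = Suc i then (\<Sum>k=seg_start (c i)..i. a k) else 0)
           + (\<Sum>k=seg_start (c m)..m. a k) = (\<Sum>k=1..m. a k)"
  using assms(3,4)
proof (induction m rule: dec_induct)
  case base
  have "c 1 \<le> 1" using cl by blast
  then show ?case by (simp add: seg_start_def)
next
  case (step m)
  have split: "(\<Sum>i=1..Suc m - 1. if c (Suc i) = Suc i then (\<Sum>k=seg_start (c i)..i. a k) else 0)
      = (\<Sum>i=1..m-1. if c (Suc i) = Suc i then (\<Sum>k=seg_start (c i)..i. a k) else 0)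
        + (if c (Suc m) = Suc m then (\<Sum>k=seg_start (c m)..m. a k) else 0)"
  proof -
    have "{1..Suc m - 1} = insert m {1..m-1}" "m \<notin> {1..m-1}" using step.hyps by auto
    then show ?thesis by (simp add: add.commute)
  qed
  have IH: "(\<Sum>i=1..m-1. if c (Suc i) = Suc i then (\<Sum>k=seg_start (c i)..i. a k) else 0)
      + (\<Sum>k=seg_start (c m)..m. a k) = (\<Sum>k=1..m. a k)" by (rule step.IH) (use step.prems in simp)
  show ?case
  proof (cases "c (Suc m) = Suc m")
    case True
    then show ?thesis using IH unfolding split by (simp add: seg_start_def)
  next
    case False
    then have "c (Suc m) = c m" using v step.prems unfolding cp_valid_def by force
    moreover have "seg_start (c m) \<le> m" using cl step.hyps by (auto simp: seg_start_def)
    ultimately have "(\<Sum>k=seg_start (c (Suc m))..Suc m. a k) = (\<Sum>k=seg_start (c m)..m. a k) + a (Suc m)"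
      by simp
    then show ?thesis using IH False unfolding split by simp
  qed
qed

lemma sum_cp_paths_Suc:
  "(\<Sum>c\<in>cp_paths (Suc m). \<phi> c) = (\<Sum>c\<in>cp_paths m. \<Sum>b\<in>{0..Suc m}. \<phi> (c(Suc m := b)))"
proof -
  have "(\<Sum>c\<in>cp_paths m. \<Sum>b\<in>{0..Suc m}. \<phi> (c(Suc m := b)))
      = (\<Sum>cb\<in>Sigma (cp_paths m) (\<lambda>_. {0..Suc m}). \<phi> ((fst cb)(Suc m := snd cb)))"
    by (subst sum.Sigma) (auto simp: finite_cp_paths case_prod_beta)
  also have "\<dots> = (\<Sum>c\<in>cp_paths (Suc m). \<phi> c)"
  proof (rule sum.reindex_bij_witness[where j="\<lambda>cb. (fst cb)(Suc m := snd cb)"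
        and i="\<lambda>c. (c(Suc m := 0), c (Suc m))"])
    fix a assume a: "a \<in> Sigma (cp_paths m) (\<lambda>_. {0..Suc m})"
    then have "fst a (Suc m) = 0" by (auto simp: cp_paths_def)
    then show "(((fst a)(Suc m := snd a))(Suc m := 0), ((fst a)(Suc m := snd a)) (Suc m)) = a"
      by (cases a) auto
    show "(fst a)(Suc m := snd a) \<in> cp_paths (Suc m)"
      using a by (auto simp: cp_paths_def)
  next
    fix c assume "c \<in> cp_paths (Suc m)"
    then show "(c(Suc m := 0), c (Suc m)) \<in> Sigma (cp_paths m) (\<lambda>_. {0..Suc m})"
      by (auto simp: cp_paths_def)
  qed simp_all
  finally show ?thesis by simp
qed

lemma cp_path_prob_upd_Suc:
  assumes "c \<in> cp_paths m"
  shows "cp_path_prob q (Suc m) (c(Suc m := b)) = cp_path_prob q m c * cp_trans q (Suc m) (c m) b"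
proof -
  have "(\<Prod>k\<in>{1..m}. cp_trans q k ((c(Suc m := b)) (k - 1)) ((c(Suc m := b)) k)) = cp_path_prob q m c"
    unfolding cp_path_prob_def by (intro prod.cong) auto
  then show ?thesis
    unfolding cp_path_prob_def by (subst prod.nat_ivl_Suc') (auto simp: mult.commute)
qed

lemma sum_cp_trans:
  assumes "a < k"
  shows "(\<Sum>b\<in>{0..k}. cp_trans q k a b) = 1"
proof -
  have "(\<Sum>b\<in>{0..k}. cp_trans q k a b)
      = (\<Sum>b\<in>{0..k}. (if b = a then q a k else 0) + (if b = k then 1 - q a k else 0))"
    using assms by (intro sum.cong) (auto simp: cp_trans_def)
  also have "\<dots> = 1"
    using assms by (simp add: sum.distrib)
  finally show ?thesis .
qed

lemma cp_path_prob_splice: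
  assumes "Suc i \<le> n" "c (Suc i) = c' (Suc i)"
  shows "cp_path_prob q n (path_splice i c c') * cp_path_prob q n (path_splice i c' c)
       = cp_path_prob q n c * cp_path_prob q n c'"
proof -
  define A where "A x = (\<Prod>k\<in>{1..Suc i}. cp_trans q k (x (k - 1)) (x k))" for x :: "nat \<Rightarrow> nat"
  define B where "B x = (\<Prod>k\<in>{Suc (Suc i)..n}. cp_trans q k (x (k - 1)) (x k))" for x :: "nat \<Rightarrow> nat"
  have split: "cp_path_prob q n x = A x * B x" for x
  proof -
    have "{1..n} = {1..Suc i} \<union> {Suc (Suc i)..n}" using assms(1) by auto
    then show ?thesis unfolding cp_path_prob_def A_def B_def by (subst prod.union_disjoint[symmetric]) auto
  qed
  have A: "A (path_splice i x x') = A x" if "x (Suc i) = x' (Suc i)" for x x'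
    unfolding A_def using that by (intro prod.cong) (auto simp: path_splice_def le_Suc_eq)
  have B: "B (path_splice i x x') = B x'" for x x'
    unfolding B_def by (intro prod.cong) (auto simp: path_splice_def)
  show ?thesis
    using assms(2) by (simp add: split A B ac_simps)
qed

locale cp_transitions =
  fixes q :: "nat \<Rightarrow> nat \<Rightarrow> real" and n :: nat
  assumes q_range: "\<forall>i j. j < i \<and> i \<le> n \<longrightarrow> 0 \<le> q j i \<and> q j i \<le> 1"
begin

lemma cp_trans_nonneg: "a < k \<Longrightarrow> k \<le> n \<Longrightarrow> 0 \<le> cp_trans q k a b"
  using q_range by (auto simp: cp_trans_def)

lemma cp_path_prob_nonneg:
  assumes "m \<le> n" "\<forall>k. c k \<le> k"
  shows "0 \<le> cp_path_prob q m c"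
  unfolding cp_path_prob_def
proof (rule prod_nonneg)
  fix k assume "k \<in> {1..m}"
  moreover have "c (k - 1) \<le> k - 1" using assms(2) by blast
  ultimately show "0 \<le> cp_trans q k (c (k - 1)) (c k)"
    using assms(1) by (intro cp_trans_nonneg) auto
qed

lemma sum_cp_paths_marginal:
  assumes dep: "\<And>c c'. (\<And>k. k \<le> m \<Longrightarrow> c k = c' k) \<Longrightarrow> \<phi> c = \<phi> c'" and "m \<le> n"
  shows "(\<Sum>c\<in>cp_paths n. ennreal (cp_path_prob q n c) * \<phi> c)
       = (\<Sum>c\<in>cp_paths m. ennreal (cp_path_prob q m c) * \<phi> c)"
proof -
  have "(\<Sum>c\<in>cp_paths n'. ennreal (cp_path_prob q n' c) * \<phi> c)
      = (\<Sum>c\<in>cp_paths m. ennreal (cp_path_prob q m c) * \<phi> c)" if "m \<le> n'" "n' \<le> n" for n'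
    using that
  proof (induction n' rule: dec_induct)
    case (step n')
    have last_step: "(\<Sum>b\<in>{0..Suc n'}. ennreal (cp_path_prob q (Suc n') (c(Suc n' := b))) * \<phi> (c(Suc n' := b)))
        = ennreal (cp_path_prob q n' c) * \<phi> c" if c: "c \<in> cp_paths n'" for c
    proof -
      have cn: "c n' < Suc n'" using cp_paths_le[OF c, of n'] by simp
      have phi: "\<phi> (c(Suc n' := b)) = \<phi> c" for b using step.hyps by (intro dep) auto
      have pn: "0 \<le> cp_path_prob q n' c"
        using cp_path_prob_nonneg[of n' c] step.prems cp_paths_le[OF c] by auto
      have tn: "0 \<le> cp_trans q (Suc n') (c n') b" for b
        using cp_trans_nonneg[OF cn] step.prems by auto
      have "(\<Sum>b\<in>{0..Suc n'}. ennreal (cp_path_prob q (Suc n') (c(Suc n' := b))) * \<phi> (c(Suc n' := b)))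
          = (\<Sum>b\<in>{0..Suc n'}. ennreal (cp_path_prob q n' c) * \<phi> c * ennreal (cp_trans q (Suc n') (c n') b))"
        using c pn tn by (intro sum.cong) (auto simp: cp_path_prob_upd_Suc phi ennreal_mult mult_ac)
      also have "\<dots> = ennreal (cp_path_prob q n' c) * \<phi> c * (\<Sum>b\<in>{0..Suc n'}. ennreal (cp_trans q (Suc n') (c n') b))"
        by (rule sum_distrib_left[symmetric])
      also have "(\<Sum>b\<in>{0..Suc n'}. ennreal (cp_trans q (Suc n') (c n') b)) = 1"
        using tn sum_cp_trans[OF cn] by (subst sum_ennreal) auto
      finally show ?thesis by (simp only: mult_1_right)
    qed
    have "(\<Sum>c\<in>cp_paths (Suc n'). ennreal (cp_path_prob q (Suc n') c) * \<phi> c)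
        = (\<Sum>c\<in>cp_paths n'. \<Sum>b\<in>{0..Suc n'}. ennreal (cp_path_prob q (Suc n') (c(Suc n' := b))) * \<phi> (c(Suc n' := b)))"
      by (rule sum_cp_paths_Suc)
    also have "\<dots> = (\<Sum>c\<in>cp_paths n'. ennreal (cp_path_prob q n' c) * \<phi> c)"
      by (intro sum.cong refl last_step)
    also have "\<dots> = (\<Sum>c\<in>cp_paths m. ennreal (cp_path_prob q m c) * \<phi> c)"
      using step by simp
    finally show ?case .
  qed simp
  from this[OF assms(2) order_refl] show ?thesis .
qed

lemma sum_cp_paths_restart:
  assumes dep: "\<And>c c'. (\<And>k. k \<le> i \<Longrightarrow> c k = c' k) \<Longrightarrow> \<phi> c = \<phi> c'" and i: "i < n"
  shows "(\<Sum>c\<in>cp_paths n. ennreal (cp_path_prob q n c) * (if c (Suc i) = Suc i then \<phi> c else 0))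
       = (\<Sum>c\<in>cp_paths n. ennreal (cp_path_prob q n c) * (ennreal (1 - q (c i) (Suc i)) * \<phi> c))"
proof -
  have dep_Suc: "(if c (Suc i) = Suc i then \<phi> c else 0) = (if c' (Suc i) = Suc i then \<phi> c' else 0)"
    if "\<And>k. k \<le> Suc i \<Longrightarrow> c k = c' k" for c c'
    using that dep[of c c'] by simp
  have dep_i: "ennreal (1 - q (c i) (Suc i)) * \<phi> c = ennreal (1 - q (c' i) (Suc i)) * \<phi> c'"
    if "\<And>k. k \<le> i \<Longrightarrow> c k = c' k" for c c'
    using that dep[of c c'] by simp
  have step: "(\<Sum>b\<in>{0..Suc i}. ennreal (cp_path_prob q (Suc i) (c(Suc i := b))) *
        (if (c(Suc i := b)) (Suc i) = Suc i then \<phi> (c(Suc i := b)) else 0))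
      = ennreal (cp_path_prob q i c) * (ennreal (1 - q (c i) (Suc i)) * \<phi> c)"
    if c: "c \<in> cp_paths i" for c
  proof -
    have cn: "c i < Suc i" using cp_paths_le[OF c, of i] by simp
    have phi: "\<phi> (c(Suc i := b)) = \<phi> c" for b by (intro dep) auto
    have "(\<Sum>b\<in>{0..Suc i}. ennreal (cp_path_prob q (Suc i) (c(Suc i := b))) *
        (if (c(Suc i := b)) (Suc i) = Suc i then \<phi> (c(Suc i := b)) else 0))
        = (\<Sum>b\<in>{0..Suc i}. if b = Suc i then ennreal (cp_path_prob q (Suc i) (c(Suc i := b))) * \<phi> c else 0)"
      by (intro sum.cong) (auto simp: phi)
    also have "\<dots> = ennreal (cp_path_prob q (Suc i) (c(Suc i := Suc i))) * \<phi> c"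
      by (subst sum.delta) auto
    also have "\<dots> = ennreal (cp_path_prob q i c) * (ennreal (1 - q (c i) (Suc i)) * \<phi> c)"
    proof -
      have "0 \<le> cp_path_prob q i c"
        using cp_path_prob_nonneg[of i c] i cp_paths_le[OF c] by auto
      moreover have "0 \<le> 1 - q (c i) (Suc i)" using q_range cn i by auto
      ultimately show ?thesis
        using c cn by (simp add: cp_path_prob_upd_Suc cp_trans_def ennreal_mult mult_ac)
    qed
    finally show ?thesis .
  qed
  have "(\<Sum>c\<in>cp_paths n. ennreal (cp_path_prob q n c) * (if c (Suc i) = Suc i then \<phi> c else 0))
      = (\<Sum>c\<in>cp_paths (Suc i). ennreal (cp_path_prob q (Suc i) c) * (if c (Suc i) = Suc i then \<phi> c else 0))"
    using i by (intro sum_cp_paths_marginal dep_Suc) auto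
  also have "\<dots> = (\<Sum>c\<in>cp_paths i. \<Sum>b\<in>{0..Suc i}. ennreal (cp_path_prob q (Suc i) (c(Suc i := b))) *
        (if (c(Suc i := b)) (Suc i) = Suc i then \<phi> (c(Suc i := b)) else 0))"
    by (rule sum_cp_paths_Suc)
  also have "\<dots> = (\<Sum>c\<in>cp_paths i. ennreal (cp_path_prob q i c) * (ennreal (1 - q (c i) (Suc i)) * \<phi> c))"
    by (intro sum.cong refl step)
  also have "\<dots> = (\<Sum>c\<in>cp_paths n. ennreal (cp_path_prob q n c) * (ennreal (1 - q (c i) (Suc i)) * \<phi> c))"
    using i by (intro sum_cp_paths_marginal[symmetric] dep_i) auto
  finally show ?thesis .
qed

text \<open>Exchange argument behind the renewal property at a restart: splicing the pasts and
  futures of two paths that both restart at i+1 is a weight-preserving bijection of pairs.\<close>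
lemma sum_restart_exchange:
  assumes i: "i < n"
    and a1: "\<And>c c'. a1 (path_splice i c c') = a1 c" and a2: "\<And>c c'. a2 (path_splice i c c') = a2 c"
    and b: "\<And>c c'. b (path_splice i c c') = b c'"
  defines "S \<equiv> {c\<in>cp_paths n. c (Suc i) = Suc i}"
  shows "(\<Sum>c\<in>S. ennreal (cp_path_prob q n c) * a1 c * b c) * (\<Sum>c\<in>S. ennreal (cp_path_prob q n c) * a2 c)
       = (\<Sum>c\<in>S. ennreal (cp_path_prob q n c) * a1 c) * (\<Sum>c\<in>S. ennreal (cp_path_prob q n c) * a2 c * b c)"
proof -
  let ?p = "\<lambda>c. ennreal (cp_path_prob q n c)"
  let ?sw = "\<lambda>x. (path_splice i (fst x) (snd x), path_splice i (snd x) (fst x))"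
  have spliceS: "c \<in> S \<Longrightarrow> c' \<in> S \<Longrightarrow> path_splice i c c' \<in> S" for c c'
    unfolding S_def cp_paths_def path_splice_def by auto
  have p_sw: "?p (fst (?sw x)) * ?p (snd (?sw x)) = ?p (fst x) * ?p (snd x)" if "x \<in> S \<times> S" for x
  proof -
    have "0 \<le> cp_path_prob q n c" if "c \<in> S" for c
      using that cp_path_prob_nonneg[of n c] by (auto simp: S_def cp_paths_def)
    then show ?thesis
      using that cp_path_prob_splice[of i n "fst x" "snd x" q] i spliceS
      by (auto simp: S_def ennreal_mult[symmetric])
  qed
  have "(\<Sum>c\<in>S. ?p c * a1 c * b c) * (\<Sum>c\<in>S. ?p c * a2 c)
      = (\<Sum>x\<in>S \<times> S. ?p (fst x) * a1 (fst x) * b (fst x) * (?p (snd x) * a2 (snd x)))"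
    by (simp add: sum_product sum.cartesian_product case_prod_beta)
  also have "\<dots> = (\<Sum>x\<in>S \<times> S. ?p (fst x) * a1 (fst x) * (?p (snd x) * a2 (snd x) * b (snd x)))"
  proof (rule sum.reindex_bij_witness[where i="?sw" and j="?sw"], goal_cases)
    case (1 x) then show ?case by (simp add: path_splice_def fun_eq_iff prod_eq_iff)
  next
    case (2 x) then show ?case using spliceS by auto
  next
    case (3 x) then show ?case by (simp add: path_splice_def fun_eq_iff prod_eq_iff)
  next
    case (4 x) then show ?case using spliceS by auto
  next
    case (5 x)
    have "?p (fst (?sw x)) * a1 (fst (?sw x)) * (?p (snd (?sw x)) * a2 (snd (?sw x)) * b (snd (?sw x)))
        = (?p (fst (?sw x)) * ?p (snd (?sw x))) * a1 (fst x) * a2 (snd x) * b (fst x)"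
      by (simp add: a1 a2 b mult_ac)
    then show ?case unfolding p_sw[OF 5] by (simp only: ac_simps)
  qed
  also have "\<dots> = (\<Sum>c\<in>S. ?p c * a1 c) * (\<Sum>c\<in>S. ?p c * a2 c * b c)"
    by (simp add: sum_product sum.cartesian_product case_prod_beta)
  finally show ?thesis .
qed

end

section \<open>Factorisation of the likelihood\<close>

locale cp_model = cp_transitions q n
  for q :: "nat \<Rightarrow> nat \<Rightarrow> real" and n :: nat +
  fixes J :: "'x measure" and p :: "'y \<Rightarrow> 'x \<Rightarrow> real" and y :: "nat \<Rightarrow> 'y"
  assumes J_prob: "prob_space J"
    and lik_measurable: "\<And>k. k \<in> {1..n} \<Longrightarrow> p (y k) \<in> borel_measurable J"
    and lik_nonneg: "\<And>k x. 0 \<le> p (y k) x"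
    and seg_lik_finite: "\<forall>j i. 0 < j \<and> j \<le> i \<and> i \<le> n \<longrightarrow> (\<integral>\<^sup>+ x. ennreal (\<Prod>l=j..i. p (y l) x) \<partial>J) < \<infinity>"
    and n_pos: "1 \<le> n"
begin

abbreviation "draws \<equiv> PiM {1..n} (\<lambda>_. J)"
abbreviation "prior \<equiv> cp_prior q J n"
abbreviation "restart i \<equiv> cp_event q J n (Suc i) (Suc i)"

definition unnorm_post :: "nat \<Rightarrow> ((nat \<Rightarrow> nat) \<times> (nat \<Rightarrow> 'x)) measure" where
  "unnorm_post m = density prior (\<lambda>\<omega>. ennreal (cp_lik p y m \<omega>))"

lemma prob_space_draws: "prob_space draws"
  using J_prob by (intro prob_space_PiM) auto

lemma sets_prior: "sets prior = sets (count_space (cp_paths n) \<Otimes>\<^sub>M draws)"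
  unfolding cp_prior_def by (intro sets_pair_measure_cong) auto

lemma space_prior: "space prior = cp_paths n \<times> space draws"
  using sets_eq_imp_space_eq[OF sets_prior] by (simp add: space_pair_measure)

lemma measurable_prior:
  assumes "\<And>c. c \<in> cp_paths n \<Longrightarrow> (\<lambda>z. f (c, z)) \<in> measurable draws K"
  shows "f \<in> measurable prior K"
  unfolding measurable_cong_sets[OF sets_prior refl]
  by (rule measurable_pair_measure_countable1[OF countable_finite[OF finite_cp_paths]]) (rule assms)

lemma cpX_eq: "cpX k \<omega> = snd \<omega> (seg_start (fst \<omega> k))"
  by (simp add: cpX_def seg_start_def)

lemma measurable_cpX:
  assumes k: "k \<in> {1..n}"
  shows "cpX k \<in> measurable prior J"
proof (rule measurable_prior)
  fix c assume "c \<in> cp_paths n"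
  then have "seg_start (c k) \<in> {1..n}" using seg_start_in k by blast
  then show "(\<lambda>z. cpX k (c, z)) \<in> measurable draws J" by (simp add: cpX_eq measurable_component_singleton)
qed

lemma measurable_cpC: "cpC k \<in> measurable prior (count_space UNIV)"
  by (rule measurable_prior) (simp add: cpC_def)

lemma borel_measurable_cp_lik: "m \<le> n \<Longrightarrow> cp_lik p y m \<in> borel_measurable prior"
  unfolding cp_lik_def
  by (intro borel_measurable_prod measurable_compose[OF measurable_cpX lik_measurable]) auto

lemma borel_measurable_ennreal_lik: "k \<in> {1..n} \<Longrightarrow> (\<lambda>x. ennreal (p (y k) x)) \<in> borel_measurable J"
  using lik_measurable by measurable

lemma ennreal_cp_lik:
  "ennreal (cp_lik p y m (c, z)) = (\<Prod>k\<in>{1..m}. ennreal (p (y k) (z (seg_start (c k)))))"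
  unfolding cp_lik_def cpX_eq using lik_nonneg by (simp add: prod_ennreal)

lemma nn_integral_prior:
  assumes f: "f \<in> borel_measurable prior"
  shows "(\<integral>\<^sup>+\<omega>. f \<omega> \<partial>prior)
       = (\<Sum>c\<in>cp_paths n. ennreal (cp_path_prob q n c) * (\<integral>\<^sup>+z. f (c, z) \<partial>draws))"
proof -
  interpret draws: prob_space draws by (rule prob_space_draws)
  let ?C = "density (count_space (cp_paths n)) (\<lambda>c. ennreal (cp_path_prob q n c))"
  have "(\<integral>\<^sup>+\<omega>. f \<omega> \<partial>prior) = (\<integral>\<^sup>+ c. \<integral>\<^sup>+ z. f (c, z) \<partial>draws \<partial>?C)"
    using f unfolding cp_prior_def by (intro draws.nn_integral_fst[symmetric]) simp
  also have "\<dots> = (\<integral>\<^sup>+ c. ennreal (cp_path_prob q n c) * (\<integral>\<^sup>+ z. f (c, z) \<partial>draws) \<partial>count_space (cp_paths n))"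
    by (rule nn_integral_density) simp_all
  finally show ?thesis by (simp add: nn_integral_count_space_finite[OF finite_cp_paths])
qed

definition seg_integral :: "nat set \<Rightarrow> (nat \<Rightarrow> nat) \<Rightarrow> nat \<Rightarrow> ('x \<Rightarrow> ennreal) \<Rightarrow> ennreal" where
  "seg_integral K c s \<phi> = (\<integral>\<^sup>+x. (\<Prod>k\<in>{k\<in>K. seg_start (c k) = s}. ennreal (p (y k) x)) * \<phi> x \<partial>J)"

lemma seg_integral_empty:
  assumes "{k\<in>K. seg_start (c k) = s} = {}"
  shows "seg_integral K c s (\<lambda>_. 1) = 1"
  using prob_space.emeasure_space_1[OF J_prob] unfolding seg_integral_def assms by simp

lemma nn_integral_draws_lik:
  assumes c: "c \<in> cp_paths n" and K: "K \<subseteq> {1..n}" and a: "a \<in> {1..n}" and \<phi>: "\<phi> \<in> borel_measurable J"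
  shows "(\<integral>\<^sup>+z. (\<Prod>k\<in>K. ennreal (p (y k) (z (seg_start (c k))))) * \<phi> (z (seg_start (c a))) \<partial>draws)
       = (\<Prod>s\<in>{1..n}. seg_integral K c s (\<lambda>x. if s = seg_start (c a) then \<phi> x else 1))"
proof -
  interpret product: product_sigma_finite "\<lambda>_::nat. J"
    by (simp add: product_sigma_finite_def J_prob prob_space_imp_sigma_finite)
  define G where "G s x = (\<Prod>k\<in>{k\<in>K. seg_start (c k) = s}. ennreal (p (y k) x))
    * (if s = seg_start (c a) then \<phi> x else 1)" for s x
  have finK: "finite K" using K finite_subset by blast
  have eq: "(\<Prod>k\<in>K. ennreal (p (y k) (z (seg_start (c k))))) * \<phi> (z (seg_start (c a)))
      = (\<Prod>s\<in>{1..n}. G s (z s))" for z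
  proof -
    have "(\<Prod>k\<in>K. ennreal (p (y k) (z (seg_start (c k)))))
        = (\<Prod>s\<in>{1..n}. \<Prod>k\<in>{k\<in>K. seg_start (c k) = s}. ennreal (p (y k) (z (seg_start (c k)))))"
      by (rule prod.group[symmetric]) (use K seg_start_in[OF c] finK in auto)
    also have "\<dots> = (\<Prod>s\<in>{1..n}. \<Prod>k\<in>{k\<in>K. seg_start (c k) = s}. ennreal (p (y k) (z s)))"
      by (intro prod.cong) auto
    finally have group: "(\<Prod>k\<in>K. ennreal (p (y k) (z (seg_start (c k)))))
        = (\<Prod>s\<in>{1..n}. \<Prod>k\<in>{k\<in>K. seg_start (c k) = s}. ennreal (p (y k) (z s)))" .
    have delta: "\<phi> (z (seg_start (c a))) = (\<Prod>s\<in>{1..n}. if s = seg_start (c a) then \<phi> (z s) else 1)"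
      using seg_start_in[OF c a] by (simp add: prod.delta')
    show ?thesis
      unfolding group delta G_def by (rule prod.distrib[symmetric])
  qed
  have G_meas: "G s \<in> borel_measurable J" for s
  proof -
    have "(\<lambda>x. \<Prod>k\<in>{k\<in>K. seg_start (c k) = s}. ennreal (p (y k) x)) \<in> borel_measurable J"
      using K by (intro borel_measurable_prod_ennreal borel_measurable_ennreal_lik) auto
    then show ?thesis unfolding G_def using \<phi> by (cases "s = seg_start (c a)") auto
  qed
  have "(\<integral>\<^sup>+z. (\<Prod>k\<in>K. ennreal (p (y k) (z (seg_start (c k))))) * \<phi> (z (seg_start (c a))) \<partial>draws)
      = (\<integral>\<^sup>+z. (\<Prod>s\<in>{1..n}. G s (z s)) \<partial>draws)"
    by (simp only: eq)
  also have "\<dots> = (\<Prod>s\<in>{1..n}. integral\<^sup>N J (G s))"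
    by (rule product.product_nn_integral_prod) (auto intro: G_meas)
  finally show ?thesis unfolding G_def seg_integral_def .
qed

text \<open>Given the path c with a restart at i+1, past_weight i c \<phi> integrates the likelihood of
  y_1..y_i, weighted by \<phi> X_i, over the draws of the segments up to i; future_weight i m c does
  the same for y_(i+1)..y_m and the later segments.\<close>
definition past_weight :: "nat \<Rightarrow> (nat \<Rightarrow> nat) \<Rightarrow> ('x \<Rightarrow> ennreal) \<Rightarrow> ennreal" where
  "past_weight i c \<phi> = (\<Prod>s\<in>{1..i}. seg_integral {1..i} c s (\<lambda>x. if s = seg_start (c i) then \<phi> x else 1))"

definition future_weight :: "nat \<Rightarrow> nat \<Rightarrow> (nat \<Rightarrow> nat) \<Rightarrow> ennreal" where
  "future_weight i m c = (\<Prod>s\<in>{Suc i..n}. seg_integral {Suc i..m} c s (\<lambda>_. 1))"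

lemma past_weight_cong:
  assumes "\<And>k. k \<le> i \<Longrightarrow> c k = c' k"
  shows "past_weight i c \<phi> = past_weight i c' \<phi>"
proof -
  have "{k\<in>{1..i}. seg_start (c k) = s} = {k\<in>{1..i}. seg_start (c' k) = s}" for s
    using assms by auto
  moreover have "c i = c' i" using assms by simp
  ultimately show ?thesis unfolding past_weight_def seg_integral_def by simp
qed

lemma future_weight_cong:
  assumes "\<And>k. Suc i \<le> k \<Longrightarrow> c k = c' k"
  shows "future_weight i m c = future_weight i m c'"
proof -
  have "{k\<in>{Suc i..m}. seg_start (c k) = s} = {k\<in>{Suc i..m}. seg_start (c' k) = s}" for s
    using assms by auto
  then show ?thesis unfolding future_weight_def seg_integral_def by simp
qed

lemma future_weight_self: "future_weight i i c = 1"
  unfolding future_weight_def by (intro prod.neutral ballI seg_integral_empty) auto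

lemma past_weight_zero: "c \<in> cp_paths n \<Longrightarrow> 1 \<le> i \<Longrightarrow> past_weight i c (\<lambda>_. 0) = 0"
  unfolding past_weight_def seg_integral_def
  by (rule prod_zero) (use seg_start_le[of c n i] in \<open>auto simp: seg_start_def\<close>)

text \<open>The hypothesis on c says that no segment straddles i and i+1.\<close>
lemma nn_integral_draws_split:
  assumes c: "c \<in> cp_paths n" and i: "1 \<le> i" "i \<le> m" "m \<le> n"
    and after: "\<And>k. i < k \<Longrightarrow> k \<le> m \<Longrightarrow> i < c k" and \<phi>: "\<phi> \<in> borel_measurable J"
  shows "(\<integral>\<^sup>+z. (\<Prod>k\<in>{1..m}. ennreal (p (y k) (z (seg_start (c k))))) * \<phi> (z (seg_start (c i))) \<partial>draws)
       = past_weight i c \<phi> * future_weight i m c"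
proof -
  let ?f = "\<lambda>s. seg_integral {1..m} c s (\<lambda>x. if s = seg_start (c i) then \<phi> x else 1)"
  have ci: "seg_start (c i) \<le> i" using seg_start_le[OF c i(1)] .
  have past: "{k\<in>{1..m}. seg_start (c k) = s} = {k\<in>{1..i}. seg_start (c k) = s}" if s: "s \<le> i" for s
  proof -
    have "k \<le> i" if "k \<in> {1..m}" "seg_start (c k) = s" for k
    proof (rule ccontr)
      assume "\<not> k \<le> i"
      then have "i < c k" using after that by auto
      then show False using that s by (simp add: seg_start_def)
    qed
    then show ?thesis using i by auto
  qed
  have future: "{k\<in>{1..m}. seg_start (c k) = s} = {k\<in>{Suc i..m}. seg_start (c k) = s}" if "i < s" for s
    using that seg_start_le[OF c] by force
  have "{1..n} = {1..i} \<union> {Suc i..n}" using i by auto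
  then have "(\<Prod>s\<in>{1..n}. ?f s) = (\<Prod>s\<in>{1..i}. ?f s) * (\<Prod>s\<in>{Suc i..n}. ?f s)"
    by (simp add: prod.union_disjoint)
  also have "(\<Prod>s\<in>{1..i}. ?f s) = past_weight i c \<phi>"
    unfolding past_weight_def
  proof (intro prod.cong refl)
    fix s assume "s \<in> {1..i}"
    then have "s \<le> i" by simp
    then show "?f s = seg_integral {1..i} c s (\<lambda>x. if s = seg_start (c i) then \<phi> x else 1)"
      unfolding seg_integral_def past[OF \<open>s \<le> i\<close>] by simp
  qed
  also have "(\<Prod>s\<in>{Suc i..n}. ?f s) = future_weight i m c"
    unfolding future_weight_def
  proof (intro prod.cong refl)
    fix s assume "s \<in> {Suc i..n}"
    then have "i < s" by simp
    then show "?f s = seg_integral {Suc i..m} c s (\<lambda>_. 1)"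
      unfolding seg_integral_def future[OF \<open>i < s\<close>] using ci by simp
  qed
  finally show ?thesis using i c \<phi> by (subst nn_integral_draws_lik) auto
qed

lemma sets_cp_event: "cp_event q J n i j \<in> sets prior"
proof -
  have "cp_event q J n i j = cpC i -` {j} \<inter> space prior" by (auto simp: cp_event_def)
  then show ?thesis using measurable_sets[OF measurable_cpC, of "{j}" i] by simp
qed

lemma indicator_cp_event:
  "c \<in> cp_paths n \<Longrightarrow> z \<in> space draws \<Longrightarrow> indicator (cp_event q J n i j) (c, z) = (if c i = j then 1 else 0)"
  by (auto simp: cp_event_def space_prior cpC_def indicator_def)

lemma measurable_cpC_cpX:
  assumes "i \<in> {1..n}" and "\<And>t. G t \<in> borel_measurable J"
  shows "(\<lambda>\<omega>. G (cpC i \<omega>) (cpX i \<omega>)) \<in> borel_measurable prior"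
proof (rule measurable_prior)
  fix c assume "c \<in> cp_paths n"
  then have "(\<lambda>z. z (seg_start (c i))) \<in> measurable draws J"
    using assms(1) by (intro measurable_component_singleton seg_start_in)
  then show "(\<lambda>z. G (cpC i (c, z)) (cpX i (c, z))) \<in> borel_measurable draws"
    by (simp add: cpC_def cpX_eq measurable_compose[OF _ assms(2)])
qed

lemma sets_unnorm_post [measurable_cong]: "sets (unnorm_post m) = sets prior"
  and space_unnorm_post: "space (unnorm_post m) = space prior"
  by (simp_all add: unnorm_post_def)

lemma nn_integral_unnorm_post:
  assumes m: "m \<le> n" and h: "h \<in> borel_measurable prior"
  shows "(\<integral>\<^sup>+\<omega>. h \<omega> \<partial>unnorm_post m) = (\<Sum>c\<in>cp_paths n. ennreal (cp_path_prob q n c) *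
           (\<integral>\<^sup>+z. (\<Prod>k\<in>{1..m}. ennreal (p (y k) (z (seg_start (c k))))) * h (c, z) \<partial>draws))"
proof -
  have lik: "(\<lambda>\<omega>. ennreal (cp_lik p y m \<omega>)) \<in> borel_measurable prior"
    using borel_measurable_cp_lik[OF m] by measurable
  have "(\<integral>\<^sup>+\<omega>. h \<omega> \<partial>unnorm_post m) = (\<integral>\<^sup>+\<omega>. ennreal (cp_lik p y m \<omega>) * h \<omega> \<partial>prior)"
    unfolding unnorm_post_def by (rule nn_integral_density[OF lik h])
  also have "\<dots> = (\<Sum>c\<in>cp_paths n. ennreal (cp_path_prob q n c) *
      (\<integral>\<^sup>+z. ennreal (cp_lik p y m (c, z)) * h (c, z) \<partial>draws))"
    by (rule nn_integral_prior) (use lik h in measurable)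
  finally show ?thesis by (simp only: ennreal_cp_lik)
qed

lemma nn_integral_unnorm_post_restart:
  assumes i: "1 \<le> i" "i < n" and m: "i \<le> m" "m \<le> n" and G: "\<And>t. G t \<in> borel_measurable J"
  shows "(\<integral>\<^sup>+\<omega>. indicator (restart i) \<omega> * G (cpC i \<omega>) (cpX i \<omega>) \<partial>unnorm_post m)
       = (\<Sum>c\<in>{c\<in>cp_paths n. c (Suc i) = Suc i}.
            ennreal (cp_path_prob q n c) * past_weight i c (G (c i)) * future_weight i m c)"
proof -
  have "(\<lambda>\<omega>. G (cpC i \<omega>) (cpX i \<omega>)) \<in> borel_measurable prior"
    by (rule measurable_cpC_cpX) (use i G in auto)
  then have h: "(\<lambda>\<omega>. indicator (restart i) \<omega> * G (cpC i \<omega>) (cpX i \<omega>)) \<in> borel_measurable prior"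
    using sets_cp_event[of "Suc i" "Suc i"] by measurable
  have "ennreal (cp_path_prob q n c) * (\<integral>\<^sup>+z. (\<Prod>k\<in>{1..m}. ennreal (p (y k) (z (seg_start (c k)))))
          * (indicator (restart i) (c, z) * G (cpC i (c, z)) (cpX i (c, z))) \<partial>draws)
      = (if c (Suc i) = Suc i
         then ennreal (cp_path_prob q n c) * past_weight i c (G (c i)) * future_weight i m c else 0)"
    if c: "c \<in> cp_paths n" for c
  proof (cases "c (Suc i) = Suc i \<and> cp_path_prob q n c \<noteq> 0")
    case True
    then have v: "cp_valid n c" by (intro cp_valid_if_path_prob_nonzero[of q]) simp
    have "i < c k" if "i < k" "k \<le> m" for k
      using cp_valid_mono[OF v, of "Suc i" k] cp_paths_le[OF c] True that m by auto
    then have "(\<integral>\<^sup>+z. (\<Prod>k\<in>{1..m}. ennreal (p (y k) (z (seg_start (c k)))))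
          * (indicator (restart i) (c, z) * G (cpC i (c, z)) (cpX i (c, z))) \<partial>draws)
        = past_weight i c (G (c i)) * future_weight i m c"
      using True c i m G
      by (subst nn_integral_draws_split[symmetric])
        (auto intro!: nn_integral_cong simp: indicator_cp_event cpC_def cpX_eq)
    then show ?thesis using True by (simp add: mult.assoc)
  next
    case False
    then show ?thesis
      by (cases "c (Suc i) = Suc i") (auto intro!: nn_integral_zero' simp: indicator_cp_event[OF c])
  qed
  then show ?thesis
    using finite_cp_paths
    by (simp add: nn_integral_unnorm_post[OF m(2) h] sum.inter_filter cong: sum.cong)
qed

lemma nn_integral_unnorm_post_past:
  assumes i: "1 \<le> i" "i \<le> n" and G: "\<And>t. G t \<in> borel_measurable J"
  shows "(\<integral>\<^sup>+\<omega>. G (cpC i \<omega>) (cpX i \<omega>) \<partial>unnorm_post i)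
       = (\<Sum>c\<in>cp_paths n. ennreal (cp_path_prob q n c) * past_weight i c (G (c i)))"
proof -
  have "(\<integral>\<^sup>+z. (\<Prod>k\<in>{1..i}. ennreal (p (y k) (z (seg_start (c k))))) * G (cpC i (c, z)) (cpX i (c, z)) \<partial>draws)
      = past_weight i c (G (c i))" if "c \<in> cp_paths n" for c
    using nn_integral_draws_split[OF that i(1) order_refl i(2) _ G] future_weight_self
    by (simp add: cpC_def cpX_eq)
  moreover have "(\<lambda>\<omega>. G (cpC i \<omega>) (cpX i \<omega>)) \<in> borel_measurable prior"
    by (rule measurable_cpC_cpX) (use i G in auto)
  ultimately show ?thesis
    using i by (simp add: nn_integral_unnorm_post)
qed

lemma emeasure_unnorm_post_restart:
  assumes "1 \<le> i" "i < n" "i \<le> m" "m \<le> n"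
  shows "emeasure (unnorm_post m) (restart i)
       = (\<Sum>c\<in>{c\<in>cp_paths n. c (Suc i) = Suc i}.
            ennreal (cp_path_prob q n c) * past_weight i c (\<lambda>_. 1) * future_weight i m c)"
proof -
  have "emeasure (unnorm_post m) (restart i)
      = (\<integral>\<^sup>+\<omega>. indicator (restart i) \<omega> * (\<lambda>_ _. 1::ennreal) (cpC i \<omega>) (cpX i \<omega>) \<partial>unnorm_post m)"
    using sets_cp_event[of "Suc i" "Suc i"] by simp
  also have "\<dots> = (\<Sum>c\<in>{c\<in>cp_paths n. c (Suc i) = Suc i}.
            ennreal (cp_path_prob q n c) * past_weight i c (\<lambda>_. 1) * future_weight i m c)"
    by (rule nn_integral_unnorm_post_restart) (use assms in auto)
  finally show ?thesis .
qed

text \<open>Renewal at a restart: conditionally on C_(i+1) = i+1, the observations after i carry no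
  information about (C_i, X_i), so conditioning on Y_(1:n) or on Y_(1:i) gives the same law.\<close>
lemma unnorm_post_restart_exchange:
  assumes i: "1 \<le> i" "i < n" and G: "\<And>t. G t \<in> borel_measurable J"
  shows "(\<integral>\<^sup>+\<omega>. indicator (restart i) \<omega> * G (cpC i \<omega>) (cpX i \<omega>) \<partial>unnorm_post n) * emeasure (unnorm_post i) (restart i)
       = (\<integral>\<^sup>+\<omega>. indicator (restart i) \<omega> * G (cpC i \<omega>) (cpX i \<omega>) \<partial>unnorm_post i) * emeasure (unnorm_post n) (restart i)"
  using i G
  by (simp add: nn_integral_unnorm_post_restart emeasure_unnorm_post_restart future_weight_self)
    (rule sum_restart_exchange; auto simp: path_splice_def intro!: past_weight_cong future_weight_cong)

lemma unnorm_post_restart_factor: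
  assumes i: "1 \<le> i" "i < n" and H: "H \<in> borel_measurable J"
  shows "(\<integral>\<^sup>+\<omega>. indicator (restart i) \<omega> * (indicator (cp_event q J n i j) \<omega> * H (cpX i \<omega>)) \<partial>unnorm_post i)
       = ennreal (1 - q j (Suc i)) * (\<integral>\<^sup>+\<omega>. indicator (cp_event q J n i j) \<omega> * H (cpX i \<omega>) \<partial>unnorm_post i)"
proof -
  define G where "G t x = (if t = j then H x else 0)" for t x
  have G: "G t \<in> borel_measurable J" for t unfolding G_def using H by (cases "t = j") auto
  have event_G: "indicator (cp_event q J n i j) \<omega> * H (cpX i \<omega>) = G (cpC i \<omega>) (cpX i \<omega>)"
    if "\<omega> \<in> space (unnorm_post i)" for \<omega>
    using that by (auto simp: G_def cp_event_def space_unnorm_post indicator_def)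
  have "(\<integral>\<^sup>+\<omega>. indicator (restart i) \<omega> * (indicator (cp_event q J n i j) \<omega> * H (cpX i \<omega>)) \<partial>unnorm_post i)
      = (\<integral>\<^sup>+\<omega>. indicator (restart i) \<omega> * G (cpC i \<omega>) (cpX i \<omega>) \<partial>unnorm_post i)"
    by (intro nn_integral_cong) (simp add: event_G)
  also have "\<dots> = (\<Sum>c\<in>cp_paths n. ennreal (cp_path_prob q n c) *
      (if c (Suc i) = Suc i then past_weight i c (G (c i)) else 0))"
    using i G finite_cp_paths
    by (simp add: nn_integral_unnorm_post_restart future_weight_self sum.inter_filter if_distrib cong: if_cong)
  also have "\<dots> = (\<Sum>c\<in>cp_paths n. ennreal (cp_path_prob q n c) * (ennreal (1 - q (c i) (Suc i)) * past_weight i c (G (c i))))"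
  proof (rule sum_cp_paths_restart[OF _ i(2)])
    fix c c' :: "nat \<Rightarrow> nat" assume same: "\<And>k. k \<le> i \<Longrightarrow> c k = c' k"
    then have "c i = c' i" by simp
    then show "past_weight i c (G (c i)) = past_weight i c' (G (c' i))"
      using past_weight_cong[of i c c', OF same] by simp
  qed
  also have "\<dots> = ennreal (1 - q j (Suc i)) * (\<Sum>c\<in>cp_paths n. ennreal (cp_path_prob q n c) * past_weight i c (G (c i)))"
    unfolding sum_distrib_left
  proof (intro sum.cong refl)
    fix c assume c: "c \<in> cp_paths n"
    show "ennreal (cp_path_prob q n c) * (ennreal (1 - q (c i) (Suc i)) * past_weight i c (G (c i)))
        = ennreal (1 - q j (Suc i)) * (ennreal (cp_path_prob q n c) * past_weight i c (G (c i)))"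
    proof (cases "c i = j")
      case False
      then have "G (c i) = (\<lambda>_. 0)" by (auto simp: G_def)
      then show ?thesis using past_weight_zero[OF c i(1)] by simp
    qed (simp add: mult_ac)
  qed
  also have "(\<Sum>c\<in>cp_paths n. ennreal (cp_path_prob q n c) * past_weight i c (G (c i)))
      = (\<integral>\<^sup>+\<omega>. indicator (cp_event q J n i j) \<omega> * H (cpX i \<omega>) \<partial>unnorm_post i)"
    using i G by (simp add: nn_integral_unnorm_post_past event_G cong: nn_integral_cong)
  finally show ?thesis .
qed

lemma seg_integral_finite:
  assumes c: "c \<in> cp_paths n" and v: "cp_valid n c" and m: "m \<le> n"
  shows "seg_integral {1..m} c s (\<lambda>_. 1) < \<infinity>"
proof (cases "{k\<in>{1..m}. seg_start (c k) = s} = {}")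
  case True
  then show ?thesis by (simp add: seg_integral_empty)
next
  case False
  obtain e where e: "1 \<le> s" "s \<le> e" "e \<le> m" "{k\<in>{1..m}. seg_start (c k) = s} = {s..e}"
    using segment_eq_interval[OF v _ m False] cp_paths_le[OF c] by blast
  have "seg_integral {1..m} c s (\<lambda>_. 1) = (\<integral>\<^sup>+x. ennreal (\<Prod>l=s..e. p (y l) x) \<partial>J)"
    unfolding seg_integral_def e(4) using lik_nonneg by (simp add: prod_ennreal)
  also have "\<dots> < \<infinity>" using seg_lik_finite e m by auto
  finally show ?thesis .
qed

lemma emeasure_unnorm_post_finite:
  assumes m: "m \<le> n"
  shows "emeasure (unnorm_post m) (space (unnorm_post m)) < \<infinity>"
proof -
  have "emeasure (unnorm_post m) (space (unnorm_post m)) = (\<integral>\<^sup>+\<omega>. 1 \<partial>unnorm_post m)" by simp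
  also have "\<dots> = (\<Sum>c\<in>cp_paths n. ennreal (cp_path_prob q n c) *
      (\<integral>\<^sup>+z. (\<Prod>k\<in>{1..m}. ennreal (p (y k) (z (seg_start (c k))))) * 1 \<partial>draws))"
    by (rule nn_integral_unnorm_post[OF m]) simp
  also have "\<dots> < top"
  proof (subst ennreal_sum_less_top[OF finite_cp_paths], intro ballI)
    fix c assume c: "c \<in> cp_paths n"
    show "ennreal (cp_path_prob q n c) *
      (\<integral>\<^sup>+z. (\<Prod>k\<in>{1..m}. ennreal (p (y k) (z (seg_start (c k))))) * 1 \<partial>draws) < top"
    proof (cases "cp_path_prob q n c = 0")
      case False
      then have "cp_valid n c" by (rule cp_valid_if_path_prob_nonzero)
      then have fin: "seg_integral {1..m} c s (\<lambda>_. 1) \<noteq> top" for s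
        using seg_integral_finite[OF c _ m] by (simp add: less_top)
      moreover have "(\<integral>\<^sup>+z. (\<Prod>k\<in>{1..m}. ennreal (p (y k) (z (seg_start (c k))))) * 1 \<partial>draws)
          = (\<Prod>s\<in>{1..n}. seg_integral {1..m} c s (\<lambda>_. 1))"
        using nn_integral_draws_lik[OF c _ _ borel_measurable_const, of "{1..m}" 1 1] m n_pos by simp
      moreover have "(\<Prod>s\<in>{1..n}. seg_integral {1..m} c s (\<lambda>_. 1)) \<noteq> top"
        unfolding ennreal_prod_eq_top using fin by blast
      ultimately show ?thesis
        by (simp add: ennreal_mult_less_top less_top)
    qed simp
  qed
  finally show ?thesis by simp
qed

lemma unnorm_post_restart_null:
  assumes i: "1 \<le> i" "i < n" and null: "emeasure (unnorm_post i) (restart i) = 0"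
  shows "emeasure (unnorm_post n) (restart i) = 0"
proof -
  have zero: "ennreal (cp_path_prob q n c) * past_weight i c (\<lambda>_. 1) = 0"
    if "c \<in> {c\<in>cp_paths n. c (Suc i) = Suc i}" for c
    using null that i finite_cp_paths by (simp add: emeasure_unnorm_post_restart future_weight_self)
  show ?thesis
    unfolding emeasure_unnorm_post_restart[OF i order_less_imp_le[OF i(2)] order_refl]
    by (intro sum.neutral ballI) (simp add: zero)
qed

section \<open>The posterior\<close>

abbreviation "post m \<equiv> cp_post q J p y n m"

definition evidence :: "nat \<Rightarrow> real" where
  "evidence m = measure (unnorm_post m) (space (unnorm_post m))"

lemma emeasure_unnorm_post_space:
  "m \<le> n \<Longrightarrow> emeasure (unnorm_post m) (space (unnorm_post m)) = ennreal (evidence m)"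
  using emeasure_unnorm_post_finite[of m] by (simp add: evidence_def emeasure_eq_ennreal_measure)

lemma cp_post_eq: "post m = cond_measure (unnorm_post m) (space (unnorm_post m))"
  unfolding cp_post_def unnorm_post_def Let_def ..

lemma sets_post [measurable_cong]: "sets (post m) = sets prior"
  by (simp add: cp_post_eq cond_measure_def sets_unnorm_post)

lemma space_post: "space (post m) = space prior"
  using sets_eq_imp_space_eq[OF sets_post] .

lemma measurable_post: "f \<in> measurable prior K \<Longrightarrow> f \<in> measurable (post m) K"
  by (simp only: measurable_cong_sets[OF sets_post refl])

lemma post_eq_density:
  assumes "m \<le> n" "0 < evidence m"
  shows "post m = density (unnorm_post m) (\<lambda>_. ennreal (1 / evidence m))"
proof -
  have "post m = density (unnorm_post m) (\<lambda>\<omega>. ennreal (indicator (space (unnorm_post m)) \<omega> / evidence m))"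
    unfolding cp_post_eq evidence_def using assms emeasure_unnorm_post_space[of m]
    by (intro cond_measure_eq_density) (auto simp: evidence_def)
  also have "\<dots> = density (unnorm_post m) (\<lambda>_. ennreal (1 / evidence m))"
    by (intro density_cong) auto
  finally show ?thesis .
qed

lemma post_null: "m \<le> n \<Longrightarrow> evidence m = 0 \<Longrightarrow> post m = null_measure (unnorm_post m)"
  unfolding cp_post_eq by (intro cond_measure_null_set) (simp_all add: emeasure_unnorm_post_space)

lemma nn_integral_post:
  assumes "m \<le> n" "0 < evidence m" and h: "h \<in> borel_measurable prior"
  shows "(\<integral>\<^sup>+\<omega>. h \<omega> \<partial>post m) = ennreal (1 / evidence m) * (\<integral>\<^sup>+\<omega>. h \<omega> \<partial>unnorm_post m)"
  unfolding post_eq_density[OF assms(1,2)] using h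
  by (subst nn_integral_density) (auto simp: nn_integral_cmult)

lemma emeasure_post:
  assumes "m \<le> n" "0 < evidence m" and A: "A \<in> sets prior"
  shows "emeasure (post m) A = ennreal (1 / evidence m) * emeasure (unnorm_post m) A"
  using nn_integral_post[OF assms(1,2), of "indicator A"] A by simp

lemma prob_space_post:
  assumes "m \<le> n" "0 < evidence m"
  shows "prob_space (post m)"
proof
  have "emeasure (post m) (space (post m)) = ennreal (1 / evidence m) * ennreal (evidence m)"
    using emeasure_post[OF assms, of "space prior"] emeasure_unnorm_post_space[OF assms(1)]
    by (simp add: space_post space_unnorm_post)
  then show "emeasure (post m) (space (post m)) = 1"
    using assms(2) by (simp flip: ennreal_mult)
qed

lemma integral_post_restart_factor:
  fixes g :: "'x \<Rightarrow> real"
  assumes i: "1 \<le> i" "i < n" and j: "j \<le> i" and ev: "0 < evidence i" and g: "g \<in> borel_measurable J"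
  shows "(\<integral>\<omega>. indicator (cp_event q J n i j \<inter> restart i) \<omega> * g (cpX i \<omega>) \<partial>post i)
       = (1 - q j (Suc i)) * (\<integral>\<omega>. indicator (cp_event q J n i j) \<omega> * g (cpX i \<omega>) \<partial>post i)"
proof (rule integral_weighted_proportional[OF refl, where X="cpX i" and N=J and g=g
      and D="indicator (cp_event q J n i j \<inter> restart i)" and D'="indicator (cp_event q J n i j)"])
  let ?F = "cp_event q J n i j"
  have X: "cpX i \<in> measurable prior J" using i by (intro measurable_cpX) auto
  then show "cpX i \<in> measurable (post i) J" by simp
  show "(\<lambda>\<omega>. indicator (?F \<inter> restart i) \<omega>) \<in> borel_measurable (post i)"
    "(\<lambda>\<omega>. indicator ?F \<omega>) \<in> borel_measurable (post i)"
    using sets_cp_event by auto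
  show "0 \<le> 1 - q j (Suc i)" using q_range i j by auto
  fix H :: "'x \<Rightarrow> ennreal" assume H: "H \<in> borel_measurable J"
  have "(\<integral>\<^sup>+\<omega>. ennreal (indicator (?F \<inter> restart i) \<omega>) * H (cpX i \<omega>) \<partial>unnorm_post i)
      = (\<integral>\<^sup>+\<omega>. indicator (restart i) \<omega> * (indicator ?F \<omega> * H (cpX i \<omega>)) \<partial>unnorm_post i)"
    by (intro nn_integral_cong) (auto simp: indicator_def)
  also have "\<dots> = ennreal (1 - q j (Suc i)) * (\<integral>\<^sup>+\<omega>. ennreal (indicator ?F \<omega>) * H (cpX i \<omega>) \<partial>unnorm_post i)"
    using unnorm_post_restart_factor[OF i H] by (simp add: ennreal_indicator)
  finally show "(\<integral>\<^sup>+\<omega>. ennreal (indicator (?F \<inter> restart i) \<omega>) * H (cpX i \<omega>) \<partial>post i)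
      = ennreal (1 - q j (Suc i)) * (\<integral>\<^sup>+\<omega>. ennreal (indicator ?F \<omega>) * H (cpX i \<omega>) \<partial>post i)"
    using i ev H X sets_cp_event by (simp add: nn_integral_post ennreal_indicator mult.left_commute)
qed (use g in auto)

lemma integral_post_restart_rescale:
  fixes g :: "'x \<Rightarrow> real"
  assumes i: "1 \<le> i" "i < n" and ev_i: "0 < evidence i" and ev_n: "0 < evidence n"
    and E_pos: "0 < measure (post i) (restart i)" and g: "g \<in> borel_measurable J"
  shows "(\<integral>\<omega>. indicator (cp_event q J n i j \<inter> restart i) \<omega> * g (cpX i \<omega>) \<partial>post n)
       = measure (post n) (restart i) / measure (post i) (restart i)
         * (\<integral>\<omega>. indicator (cp_event q J n i j \<inter> restart i) \<omega> * g (cpX i \<omega>) \<partial>post i)"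
proof (rule integral_weighted_proportional[where X="cpX i" and N=J and g=g
      and D="indicator (cp_event q J n i j \<inter> restart i)" and D'="indicator (cp_event q J n i j \<inter> restart i)"])
  let ?F = "cp_event q J n i j" and ?E = "restart i"
  have X: "cpX i \<in> measurable prior J" using i by (intro measurable_cpX) auto
  then show "cpX i \<in> measurable (post n) J" by simp
  show "(\<lambda>\<omega>. indicator (?F \<inter> ?E) \<omega>) \<in> borel_measurable (post n)"
    "(\<lambda>\<omega>. indicator (?F \<inter> ?E) \<omega>) \<in> borel_measurable (post n)"
    using sets_cp_event by auto
  show "sets (post n) = sets (post i)" by (simp add: sets_post)
  interpret Pi: prob_space "post i" using prob_space_post[OF _ ev_i] i by simp
  interpret Pn: prob_space "post n" using prob_space_post[OF _ ev_n] by simp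
  fix H :: "'x \<Rightarrow> ennreal" assume H: "H \<in> borel_measurable J"
  define G where "G t x = (if t = j then H x else 0)" for t x
  have G: "G t \<in> borel_measurable J" for t unfolding G_def using H by (cases "t = j") auto
  have h: "(\<lambda>\<omega>. ennreal (indicator (?F \<inter> ?E) \<omega>) * H (cpX i \<omega>)) \<in> borel_measurable prior"
    using X H sets_cp_event by measurable
  have via_G: "(\<integral>\<^sup>+\<omega>. ennreal (indicator (?F \<inter> ?E) \<omega>) * H (cpX i \<omega>) \<partial>unnorm_post m)
      = (\<integral>\<^sup>+\<omega>. indicator ?E \<omega> * G (cpC i \<omega>) (cpX i \<omega>) \<partial>unnorm_post m)" for m
    by (intro nn_integral_cong) (auto simp: indicator_def G_def cp_event_def space_unnorm_post)
  define a where "a = (\<integral>\<^sup>+\<omega>. ennreal (indicator (?F \<inter> ?E) \<omega>) * H (cpX i \<omega>) \<partial>post n)"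
  define b where "b = (\<integral>\<^sup>+\<omega>. ennreal (indicator (?F \<inter> ?E) \<omega>) * H (cpX i \<omega>) \<partial>post i)"
  have a_eq: "a = ennreal (1 / evidence n) * (\<integral>\<^sup>+\<omega>. indicator ?E \<omega> * G (cpC i \<omega>) (cpX i \<omega>) \<partial>unnorm_post n)"
    unfolding a_def via_G[symmetric] by (rule nn_integral_post[OF order_refl ev_n h])
  have b_eq: "b = ennreal (1 / evidence i) * (\<integral>\<^sup>+\<omega>. indicator ?E \<omega> * G (cpC i \<omega>) (cpX i \<omega>) \<partial>unnorm_post i)"
    unfolding b_def via_G[symmetric] by (rule nn_integral_post[OF _ ev_i h]) (use i in simp)
  have E_i: "emeasure (post i) ?E = ennreal (1 / evidence i) * emeasure (unnorm_post i) ?E"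
    by (rule emeasure_post[OF _ ev_i sets_cp_event]) (use i in simp)
  have E_n: "emeasure (post n) ?E = ennreal (1 / evidence n) * emeasure (unnorm_post n) ?E"
    by (rule emeasure_post[OF order_refl ev_n sets_cp_event])
  have "a * emeasure (post i) ?E
      = ennreal (1 / evidence n) * ennreal (1 / evidence i)
        * ((\<integral>\<^sup>+\<omega>. indicator ?E \<omega> * G (cpC i \<omega>) (cpX i \<omega>) \<partial>unnorm_post n) * emeasure (unnorm_post i) ?E)"
    unfolding a_eq E_i by (simp only: ac_simps)
  also have "\<dots> = ennreal (1 / evidence n) * ennreal (1 / evidence i)
        * ((\<integral>\<^sup>+\<omega>. indicator ?E \<omega> * G (cpC i \<omega>) (cpX i \<omega>) \<partial>unnorm_post i) * emeasure (unnorm_post n) ?E)"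
    by (simp only: unnorm_post_restart_exchange[where G=G, OF i G])
  also have "\<dots> = b * emeasure (post n) ?E"
    unfolding b_eq E_n by (simp only: ac_simps)
  finally have exchange: "a * ennreal (measure (post i) ?E) = b * ennreal (measure (post n) ?E)"
    by (simp add: Pi.emeasure_eq_measure Pn.emeasure_eq_measure)
  have "a = a * (ennreal (measure (post i) ?E) * ennreal (1 / measure (post i) ?E))"
    using E_pos by (simp flip: ennreal_mult)
  also have "\<dots> = b * ennreal (measure (post n) ?E) * ennreal (1 / measure (post i) ?E)"
    using exchange by (simp add: mult.assoc[symmetric])
  also have "\<dots> = ennreal (measure (post n) ?E / measure (post i) ?E) * b"
    using E_pos by (simp add: mult_ac flip: ennreal_mult)
  finally show "a = ennreal (measure (post n) ?E / measure (post i) ?E) * b" .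
qed (use g i in \<open>auto simp: divide_nonneg_nonneg\<close>)

section \<open>Segment decomposition of posterior expectations\<close>

lemma integral_post_segment_end:
  fixes g :: "'x \<Rightarrow> real"
  assumes i: "1 \<le> i" "i < n" and j: "j \<le> i" and ev_n: "0 < evidence n" and g: "g \<in> borel_measurable J"
  shows "cp_ctil q J p y n j i * cp_qtil q J p y n (i + 1) * (\<integral>x. g x \<partial>cp_H q J p y n j i)
       = (\<integral>\<omega>. indicator (cp_event q J n i j \<inter> restart i) \<omega> * g (cpX i \<omega>) \<partial>post n)"
proof -
  let ?F = "cp_event q J n i j" and ?E = "restart i"
  interpret Pn: prob_space "post n" by (rule prob_space_post[OF order_refl ev_n])
  have qtil: "cp_qtil q J p y n (i + 1) = measure (post n) ?E" unfolding cp_qtil_def by simp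
  show ?thesis
  proof (cases "measure (post n) ?E = 0")
    case True
    then have "AE \<omega> in post n. \<omega> \<notin> ?E"
      using sets_cp_event by (intro AE_not_in null_setsI) (auto simp: Pn.emeasure_eq_measure)
    moreover have "(\<lambda>\<omega>. indicator (?F \<inter> ?E) \<omega> * g (cpX i \<omega>)) \<in> borel_measurable (post n)"
      using i sets_cp_event
      by (intro borel_measurable_times borel_measurable_indicator measurable_compose[OF measurable_post g]
          measurable_cpX) (auto simp: sets_post)
    ultimately have "(\<integral>\<omega>. indicator (?F \<inter> ?E) \<omega> * g (cpX i \<omega>) \<partial>post n) = (\<integral>\<omega>. 0 \<partial>post n)"
      by (intro integral_cong_AE) auto
    then show ?thesis unfolding qtil True by simp
  next
    case False
    have "emeasure (post n) ?E \<noteq> 0" using False by (simp add: Pn.emeasure_eq_measure)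
    then have "emeasure (unnorm_post n) ?E \<noteq> 0"
      using emeasure_post[OF order_refl ev_n sets_cp_event[of "Suc i" "Suc i"]] by auto
    then have unnorm_i: "emeasure (unnorm_post i) ?E \<noteq> 0"
      using unnorm_post_restart_null[OF i] by blast
    have ev_i: "0 < evidence i"
    proof -
      have le: "emeasure (unnorm_post i) ?E \<le> ennreal (evidence i)"
        using emeasure_space[of "unnorm_post i" ?E] emeasure_unnorm_post_space[of i] i by simp
      show ?thesis
      proof (rule ccontr)
        assume "\<not> 0 < evidence i"
        then have "ennreal (evidence i) = 0" by (simp add: ennreal_eq_0_iff)
        then show False using le unnorm_i by simp
      qed
    qed
    interpret Pi: prob_space "post i" using prob_space_post[OF _ ev_i] i by simp
    have Pi_E: "0 < measure (post i) ?E"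
    proof -
      have "emeasure (post i) ?E \<noteq> 0"
        using unnorm_i ev_i emeasure_post[OF _ ev_i sets_cp_event[of "Suc i" "Suc i"]] i by simp
      then show ?thesis by (simp add: Pi.emeasure_eq_measure ennreal_eq_0_iff not_le)
    qed
    have X: "cpX i \<in> measurable (post i) J" using i by (intro measurable_post measurable_cpX) simp
    have events: "?F \<in> sets (post i)" "?E \<in> sets (post i)" using sets_cp_event by auto
    have ctil: "cp_ctil q J p y n j i = (1 - q j (Suc i)) * measure (post i) ?F / measure (post i) ?E"
    proof -
      have "measure (post i) (?F \<inter> ?E) = (1 - q j (Suc i)) * measure (post i) ?F"
        using integral_post_restart_factor[OF i j ev_i borel_measurable_const[of 1]] events
        by (simp add: Pi.emeasure_eq_measure)
      then show ?thesis
        unfolding cp_ctil_def using i events Pi_E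
        by (simp add: measure_cond_measure[OF Pi.prob_space_axioms])
    qed
    have "cp_ctil q J p y n j i * cp_qtil q J p y n (i + 1) * (\<integral>x. g x \<partial>cp_H q J p y n j i)
        = measure (post n) ?E / measure (post i) ?E * ((1 - q j (Suc i)) *
            (measure (post i) ?F * (\<integral>x. g x \<partial>cp_H q J p y n j i)))"
      unfolding ctil qtil by (simp add: field_simps)
    also have "\<dots> = measure (post n) ?E / measure (post i) ?E * ((1 - q j (Suc i)) *
            (\<integral>\<omega>. indicator ?F \<omega> * g (cpX i \<omega>) \<partial>post i))"
      unfolding cp_H_def using events X g
      by (simp add: measure_mult_integral_distr_cond_measure[OF Pi.prob_space_axioms])
    also have "\<dots> = (\<integral>\<omega>. indicator (?F \<inter> ?E) \<omega> * g (cpX i \<omega>) \<partial>post n)"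
      using i j ev_i ev_n Pi_E g
      by (simp add: integral_post_restart_factor integral_post_restart_rescale)
    finally show ?thesis .
  qed
qed

lemma integral_post_last_segment:
  fixes g :: "'x \<Rightarrow> real"
  assumes ev_n: "0 < evidence n" and g: "g \<in> borel_measurable J"
  shows "cp_ctil q J p y n j n * (\<integral>x. g x \<partial>cp_H q J p y n j n)
       = (\<integral>\<omega>. indicator (cp_event q J n n j) \<omega> * g (cpX n \<omega>) \<partial>post n)"
proof -
  have "cpX n \<in> measurable (post n) J" using n_pos by (intro measurable_post measurable_cpX) simp
  then show ?thesis
    unfolding cp_ctil_def cp_H_def using sets_cp_event g prob_space_post[OF order_refl ev_n]
    by (simp add: measure_mult_integral_distr_cond_measure)
qed

lemma AE_prior_cp_valid: "AE \<omega> in prior. cp_valid n (fst \<omega>)"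
proof (rule AE_I')
  let ?V = "{\<omega>\<in>space prior. \<not> cp_valid n (fst \<omega>)}"
  have V: "?V \<in> sets prior"
  proof -
    have "(\<lambda>\<omega>. cp_valid n (fst \<omega>)) \<in> measurable prior (count_space UNIV)"
      by (rule measurable_prior) simp
    then show ?thesis by measurable
  qed
  have "emeasure prior ?V = (\<Sum>c\<in>cp_paths n. ennreal (cp_path_prob q n c) * (\<integral>\<^sup>+z. indicator ?V (c, z) \<partial>draws))"
    using V by (simp add: nn_integral_prior flip: nn_integral_indicator)
  also have "\<dots> = 0"
  proof (intro sum.neutral ballI)
    fix c assume c: "c \<in> cp_paths n"
    show "ennreal (cp_path_prob q n c) * (\<integral>\<^sup>+z. indicator ?V (c, z) \<partial>draws) = 0"
    proof (cases "cp_valid n c")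
      case True
      then show ?thesis by (simp add: indicator_def)
    next
      case False
      then have "cp_path_prob q n c = 0" using cp_valid_if_path_prob_nonzero by blast
      then show ?thesis by simp
    qed
  qed
  finally show "?V \<in> null_sets prior" using V by (simp add: null_sets_def)
qed simp

lemma AE_post_cp_valid:
  assumes ev_n: "0 < evidence n"
  shows "AE \<omega> in post n. cp_valid n (fst \<omega>)"
proof -
  have lik: "(\<lambda>\<omega>. ennreal (cp_lik p y n \<omega>)) \<in> borel_measurable prior"
    using borel_measurable_cp_lik[of n] by measurable
  have "AE \<omega> in prior. 0 < ennreal (cp_lik p y n \<omega>) \<longrightarrow> cp_valid n (fst \<omega>)"
    using AE_prior_cp_valid by (rule AE_mp) (rule AE_I2, simp)
  then have "AE \<omega> in unnorm_post n. cp_valid n (fst \<omega>)"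
    unfolding unnorm_post_def by (simp only: AE_density[OF lik])
  then have "AE \<omega> in unnorm_post n. 0 < ennreal (1 / evidence n) \<longrightarrow> cp_valid n (fst \<omega>)"
    by (rule AE_mp) (rule AE_I2, simp)
  then show ?thesis
    unfolding post_eq_density[OF order_refl ev_n] by (simp only: AE_density[OF borel_measurable_const])
qed

lemma cpX_eq_on_segment:
  assumes \<omega>: "\<omega> \<in> space prior" and v: "cp_valid n (fst \<omega>)" and i: "i \<le> n"
    and k: "max (cpC i \<omega>) 1 \<le> k" "k \<le> i"
  shows "cpX k \<omega> = cpX i \<omega>"
proof -
  have "\<forall>k. fst \<omega> k \<le> k" using \<omega> cp_paths_le by (auto simp: space_prior)
  then show ?thesis
    using seg_start_eq_on_segment[OF v _ i, of k] k by (simp add: cpX_eq cpC_def seg_start_def)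
qed

lemma sum_cpX_by_segments:
  fixes t :: "nat \<Rightarrow> 'x \<Rightarrow> real"
  assumes \<omega>: "\<omega> \<in> space prior" and v: "cp_valid n (fst \<omega>)"
  shows "(\<Sum>i=1..n-1. \<Sum>j=0..i. indicator (cp_event q J n i j \<inter> restart i) \<omega> * (\<Sum>k=max j 1..i. t k (cpX i \<omega>)))
       + (\<Sum>j=0..n. indicator (cp_event q J n n j) \<omega> * (\<Sum>k=max j 1..n. t k (cpX n \<omega>)))
       = (\<Sum>k=1..n. t k (cpX k \<omega>))"
proof -
  define c where "c = fst \<omega>"
  have c: "c \<in> cp_paths n" and z: "snd \<omega> \<in> space draws" using \<omega> by (auto simp: space_prior c_def)
  have cl: "\<forall>k. c k \<le> k" using cp_paths_le[OF c] by blast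
  have ind: "indicator (cp_event q J n i j) \<omega> = (if c i = j then 1 else 0)" for i j
    using indicator_cp_event[OF c z, of i j] by (simp add: c_def)
  have seg: "(\<Sum>k=max (c i) 1..i. t k (cpX i \<omega>)) = (\<Sum>k=seg_start (c i)..i. t k (cpX k \<omega>))"
    if i: "i \<le> n" for i
  proof (unfold seg_start_def, intro sum.cong refl)
    fix k assume "k \<in> {max (c i) 1..i}"
    then show "t k (cpX i \<omega>) = t k (cpX k \<omega>)"
      using cpX_eq_on_segment[OF \<omega> v i, of k] by (simp add: cpC_def c_def)
  qed
  have inner: "(\<Sum>j=0..i. indicator (cp_event q J n i j \<inter> restart i) \<omega> * (\<Sum>k=max j 1..i. t k (cpX i \<omega>)))
      = (if c (Suc i) = Suc i then (\<Sum>k=seg_start (c i)..i. t k (cpX k \<omega>)) else 0)" if "i \<le> n" for i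
  proof -
    have "(\<Sum>j=0..i. indicator (cp_event q J n i j \<inter> restart i) \<omega> * (\<Sum>k=max j 1..i. t k (cpX i \<omega>)))
        = (\<Sum>j=0..i. if c i = j then (if c (Suc i) = Suc i then (\<Sum>k=max j 1..i. t k (cpX i \<omega>)) else 0) else 0)"
      by (intro sum.cong refl) (simp add: indicator_inter_arith ind)
    also have "\<dots> = (if c (Suc i) = Suc i then (\<Sum>k=max (c i) 1..i. t k (cpX i \<omega>)) else 0)"
      using cl by (subst sum.delta') auto
    finally show ?thesis using seg[OF that] by simp
  qed
  have last: "(\<Sum>j=0..n. indicator (cp_event q J n n j) \<omega> * (\<Sum>k=max j 1..n. t k (cpX n \<omega>)))
      = (\<Sum>k=seg_start (c n)..n. t k (cpX k \<omega>))"
  proof -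
    have "(\<Sum>j=0..n. indicator (cp_event q J n n j) \<omega> * (\<Sum>k=max j 1..n. t k (cpX n \<omega>)))
        = (\<Sum>j=0..n. if c n = j then (\<Sum>k=max j 1..n. t k (cpX n \<omega>)) else 0)"
      by (intro sum.cong refl) (simp add: ind)
    also have "\<dots> = (\<Sum>k=max (c n) 1..n. t k (cpX n \<omega>))"
      using cl by (subst sum.delta') auto
    finally show ?thesis using seg[of n] by simp
  qed
  have "(\<Sum>i=1..n-1. \<Sum>j=0..i. indicator (cp_event q J n i j \<inter> restart i) \<omega> * (\<Sum>k=max j 1..i. t k (cpX i \<omega>)))
      = (\<Sum>i=1..n-1. if c (Suc i) = Suc i then (\<Sum>k=seg_start (c i)..i. t k (cpX k \<omega>)) else 0)"
    by (intro sum.cong refl inner) auto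
  then show ?thesis
    unfolding last using sum_by_segments[OF v[folded c_def] cl n_pos order_refl] by simp
qed

lemma integrable_post_segment:
  fixes t :: "nat \<Rightarrow> 'x \<Rightarrow> real"
  assumes ev_n: "0 < evidence n"
    and t_meas: "\<And>k. k \<in> {1..n} \<Longrightarrow> t k \<in> borel_measurable J"
    and t_int: "\<And>k. k \<in> {1..n} \<Longrightarrow> integrable (post n) (\<lambda>\<omega>. t k (cpX k \<omega>))"
    and i: "i \<in> {1..n}" and B: "B \<in> sets prior" "B \<subseteq> cp_event q J n i j"
  shows "integrable (post n) (\<lambda>\<omega>. indicator B \<omega> * (\<Sum>k=max j 1..i. t k (cpX i \<omega>)))"
proof (rule integrable_cong_AE_imp)
  show "integrable (post n) (\<lambda>\<omega>. \<Sum>k=max j 1..i. t k (cpX k \<omega>) * indicator B \<omega>)"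
    using i B by (intro Bochner_Integration.integrable_sum integrable_real_mult_indicator t_int) auto
  have "cpX i \<in> measurable (post n) J" using i by (intro measurable_post measurable_cpX)
  then show "(\<lambda>\<omega>. indicator B \<omega> * (\<Sum>k=max j 1..i. t k (cpX i \<omega>))) \<in> borel_measurable (post n)"
    using i B t_meas by (intro borel_measurable_times borel_measurable_sum) (auto intro: measurable_compose)
  show "AE \<omega> in post n. (\<Sum>k=max j 1..i. t k (cpX k \<omega>) * indicator B \<omega>)
      = indicator B \<omega> * (\<Sum>k=max j 1..i. t k (cpX i \<omega>))"
    using AE_post_cp_valid[OF ev_n]
  proof (rule AE_mp, intro AE_I2 impI)
    fix \<omega> assume \<omega>: "\<omega> \<in> space (post n)" and v: "cp_valid n (fst \<omega>)"
    show "(\<Sum>k=max j 1..i. t k (cpX k \<omega>) * indicator B \<omega>) = indicator B \<omega> * (\<Sum>k=max j 1..i. t k (cpX i \<omega>))"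
    proof (cases "\<omega> \<in> B")
      case True
      have "(\<Sum>k=max j 1..i. t k (cpX k \<omega>)) = (\<Sum>k=max j 1..i. t k (cpX i \<omega>))"
      proof (intro sum.cong refl)
        fix k assume "k \<in> {max j 1..i}"
        then show "t k (cpX k \<omega>) = t k (cpX i \<omega>)"
          using cpX_eq_on_segment[OF _ v, of i k] \<omega> B True i by (auto simp: space_post cp_event_def)
      qed
      then show ?thesis using True by simp
    qed simp
  qed
qed

lemma integral_post_sum_by_segments:
  fixes t :: "nat \<Rightarrow> 'x \<Rightarrow> real"
  assumes ev_n: "0 < evidence n"
    and t_meas: "\<And>k. k \<in> {1..n} \<Longrightarrow> t k \<in> borel_measurable J"
    and t_int: "\<And>k. k \<in> {1..n} \<Longrightarrow> integrable (post n) (\<lambda>\<omega>. t k (cpX k \<omega>))"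
  shows "(\<integral>\<omega>. (\<Sum>k=1..n. t k (cpX k \<omega>)) \<partial>post n)
       = (\<Sum>i=1..n-1. \<Sum>j=0..i. cp_ctil q J p y n j i * cp_qtil q J p y n (i + 1)
            * (\<integral>x. (\<Sum>k=max j 1..i. t k x) \<partial>cp_H q J p y n j i))
         + (\<Sum>j=0..n. cp_ctil q J p y n j n * (\<integral>x. (\<Sum>k=max j 1..n. t k x) \<partial>cp_H q J p y n j n))"
proof -
  define end_at where "end_at i j \<omega> = indicator (cp_event q J n i j \<inter> restart i) \<omega> * (\<Sum>k=max j 1..i. t k (cpX i \<omega>))"
    for i j \<omega>
  define last where "last j \<omega> = indicator (cp_event q J n n j) \<omega> * (\<Sum>k=max j 1..n. t k (cpX n \<omega>))" for j \<omega>
  have g_meas: "(\<lambda>x. \<Sum>k=max j 1..i. t k x) \<in> borel_measurable J" if "i \<le> n" for i j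
    using that t_meas by auto
  have int_end: "integrable (post n) (end_at i j)" if "i \<in> {1..n-1}" for i j
    unfolding end_at_def using that sets_cp_event
    by (intro integrable_post_segment[OF ev_n t_meas t_int]) auto
  have int_last: "integrable (post n) (last j)" for j
    unfolding last_def using n_pos sets_cp_event
    by (intro integrable_post_segment[OF ev_n t_meas t_int]) auto
  have "(\<integral>\<omega>. (\<Sum>k=1..n. t k (cpX k \<omega>)) \<partial>post n)
      = (\<integral>\<omega>. (\<Sum>i=1..n-1. \<Sum>j=0..i. end_at i j \<omega>) + (\<Sum>j=0..n. last j \<omega>) \<partial>post n)"
  proof (rule integral_cong_AE)
    show "(\<lambda>\<omega>. \<Sum>k=1..n. t k (cpX k \<omega>)) \<in> borel_measurable (post n)"
      using t_int by (intro borel_measurable_sum) (auto dest: borel_measurable_integrable)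
    show "(\<lambda>\<omega>. (\<Sum>i=1..n-1. \<Sum>j=0..i. end_at i j \<omega>) + (\<Sum>j=0..n. last j \<omega>)) \<in> borel_measurable (post n)"
      using int_end int_last by (intro borel_measurable_add borel_measurable_sum) (auto dest: borel_measurable_integrable)
    show "AE \<omega> in post n. (\<Sum>k=1..n. t k (cpX k \<omega>)) = (\<Sum>i=1..n-1. \<Sum>j=0..i. end_at i j \<omega>) + (\<Sum>j=0..n. last j \<omega>)"
      using AE_post_cp_valid[OF ev_n]
    proof (rule AE_mp, intro AE_I2 impI)
      fix \<omega> assume "\<omega> \<in> space (post n)" "cp_valid n (fst \<omega>)"
      then show "(\<Sum>k=1..n. t k (cpX k \<omega>)) = (\<Sum>i=1..n-1. \<Sum>j=0..i. end_at i j \<omega>) + (\<Sum>j=0..n. last j \<omega>)"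
        unfolding end_at_def last_def by (intro sum_cpX_by_segments[symmetric]) (simp_all add: space_post)
    qed
  qed
  also have "\<dots> = (\<integral>\<omega>. (\<Sum>i=1..n-1. \<Sum>j=0..i. end_at i j \<omega>) \<partial>post n) + (\<integral>\<omega>. (\<Sum>j=0..n. last j \<omega>) \<partial>post n)"
    using int_end int_last by (intro Bochner_Integration.integral_add Bochner_Integration.integrable_sum) auto
  also have "\<dots> = (\<Sum>i=1..n-1. \<Sum>j=0..i. \<integral>\<omega>. end_at i j \<omega> \<partial>post n) + (\<Sum>j=0..n. \<integral>\<omega>. last j \<omega> \<partial>post n)"
    using int_end int_last by (simp add: Bochner_Integration.integral_sum Bochner_Integration.integrable_sum)
  also have "\<dots> = (\<Sum>i=1..n-1. \<Sum>j=0..i. cp_ctil q J p y n j i * cp_qtil q J p y n (i + 1)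
            * (\<integral>x. (\<Sum>k=max j 1..i. t k x) \<partial>cp_H q J p y n j i))
         + (\<Sum>j=0..n. cp_ctil q J p y n j n * (\<integral>x. (\<Sum>k=max j 1..n. t k x) \<partial>cp_H q J p y n j n))"
    unfolding end_at_def last_def
  proof (intro arg_cong2[where f="(+)"] sum.cong refl)
    fix i j assume "i \<in> {1..n-1}" "j \<in> {0..i}"
    then show "(\<integral>\<omega>. indicator (cp_event q J n i j \<inter> restart i) \<omega> * (\<Sum>k=max j 1..i. t k (cpX i \<omega>)) \<partial>post n)
        = cp_ctil q J p y n j i * cp_qtil q J p y n (i + 1) * (\<integral>x. (\<Sum>k=max j 1..i. t k x) \<partial>cp_H q J p y n j i)"
      using ev_n g_meas by (intro integral_post_segment_end[symmetric]) auto
  next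
    fix j
    show "(\<integral>\<omega>. indicator (cp_event q J n n j) \<omega> * (\<Sum>k=max j 1..n. t k (cpX n \<omega>)) \<partial>post n)
        = cp_ctil q J p y n j n * (\<integral>x. (\<Sum>k=max j 1..n. t k x) \<partial>cp_H q J p y n j n)"
      using ev_n g_meas by (intro integral_post_last_segment[symmetric]) auto
  qed
  finally show ?thesis .
qed

lemma integral_post_affine_statistics:
  fixes g :: "'y \<Rightarrow> 'x \<Rightarrow> real" and T :: "'l \<Rightarrow> 'x \<Rightarrow> 'y \<Rightarrow> real"
  assumes ev_n: "0 < evidence n" and L: "finite L"
    and g_eq: "\<And>x k. x \<in> space J \<Longrightarrow> k \<in> {1..n} \<Longrightarrow> g (y k) x = (\<Sum>l\<in>L. \<eta> l * T l x (y k)) + a"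
    and T_meas: "\<And>l k. l \<in> L \<Longrightarrow> k \<in> {1..n} \<Longrightarrow> (\<lambda>x. T l x (y k)) \<in> borel_measurable J"
    and T_int: "\<And>l k. l \<in> L \<Longrightarrow> k \<in> {1..n} \<Longrightarrow> integrable (post n) (\<lambda>\<omega>. T l (cpX k \<omega>) (y k))"
  shows "(\<integral>\<omega>. (\<Sum>k=1..n. g (y k) (cpX k \<omega>)) \<partial>post n)
       = real n * a + (\<Sum>l\<in>L. \<eta> l *
           ((\<Sum>i=1..n-1. \<Sum>j=0..i. cp_ctil q J p y n j i * cp_qtil q J p y n (i + 1)
               * (\<integral>x. (\<Sum>k=max j 1..i. T l x (y k)) \<partial>cp_H q J p y n j i))
            + (\<Sum>j=0..n. cp_ctil q J p y n j n * (\<integral>x. (\<Sum>k=max j 1..n. T l x (y k)) \<partial>cp_H q J p y n j n))))"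
proof -
  interpret post: prob_space "post n" by (rule prob_space_post[OF order_refl ev_n])
  have "cpX k \<omega> \<in> space J" if "k \<in> {1..n}" "\<omega> \<in> space (post n)" for k \<omega>
    using measurable_space[OF measurable_post[OF measurable_cpX[OF that(1)]] that(2)] .
  then have "(\<integral>\<omega>. (\<Sum>k=1..n. g (y k) (cpX k \<omega>)) \<partial>post n)
      = (\<integral>\<omega>. (\<Sum>k=1..n. (\<Sum>l\<in>L. \<eta> l * T l (cpX k \<omega>) (y k)) + a) \<partial>post n)"
    by (intro Bochner_Integration.integral_cong refl sum.cong g_eq) auto
  also have "\<dots> = real n * a + (\<Sum>l\<in>L. \<eta> l * (\<integral>\<omega>. (\<Sum>k=1..n. T l (cpX k \<omega>) (y k)) \<partial>post n))"
    using L T_int by (subst integral_affine_sum) (auto intro: post.prob_space_axioms)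
  also have "\<dots> = real n * a + (\<Sum>l\<in>L. \<eta> l *
           ((\<Sum>i=1..n-1. \<Sum>j=0..i. cp_ctil q J p y n j i * cp_qtil q J p y n (i + 1)
               * (\<integral>x. (\<Sum>k=max j 1..i. T l x (y k)) \<partial>cp_H q J p y n j i))
            + (\<Sum>j=0..n. cp_ctil q J p y n j n * (\<integral>x. (\<Sum>k=max j 1..n. T l x (y k)) \<partial>cp_H q J p y n j n))))"
    using T_meas T_int
    by (intro arg_cong2[where f="(+)"] arg_cong2[where f="(*)"] sum.cong refl integral_post_sum_by_segments ev_n)
      auto
  finally show ?thesis .
qed

end

section \<open>The EM step\<close>

lemma measurable_section:
  "(\<lambda>(x, z). T x z) \<in> borel_measurable (M \<Otimes>\<^sub>M N) \<Longrightarrow> z \<in> space N \<Longrightarrow> (\<lambda>x. T x z) \<in> borel_measurable M"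
  using measurable_compose[OF measurable_Pair2'[of z N M]] by simp

lemma cp_model_exp_family:
  fixes f :: "'y \<Rightarrow> 'x \<Rightarrow> real" and T :: "'l \<Rightarrow> 'x \<Rightarrow> 'y \<Rightarrow> real"
  assumes "\<forall>i j. j < i \<and> i \<le> n \<longrightarrow> 0 \<le> q j i \<and> q j i \<le> 1" and "prob_space J" and "1 \<le> n"
    and y_in: "\<forall>k\<in>{1..n}. y k \<in> space \<psi>"
    and T_meas: "\<forall>l\<in>L. (\<lambda>(x, z). T l x z) \<in> borel_measurable (J \<Otimes>\<^sub>M \<psi>)"
    and f_eq: "\<forall>x\<in>space J. \<forall>z\<in>space \<psi>. f z x = (\<Sum>l\<in>L. \<eta> l * T l x z) + a"
    and "\<forall>j i. 0 < j \<and> j \<le> i \<and> i \<le> n \<longrightarrow> (\<integral>\<^sup>+ x. ennreal (\<Prod>l=j..i. exp (f (y l) x)) \<partial>J) < \<infinity>"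
  shows "cp_model q n J (\<lambda>z x. exp (f z x)) y"
proof (intro cp_model.intro cp_model_axioms.intro cp_transitions.intro assms(1,2,3,7))
  fix k assume k: "k \<in> {1..n}"
  have "(\<lambda>x. T l x (y k)) \<in> borel_measurable J" if "l \<in> L" for l
    using measurable_section[OF T_meas[rule_format, OF that] bspec[OF y_in k]] .
  then have "(\<lambda>x. \<Sum>l\<in>L. \<eta> l * T l x (y k)) \<in> borel_measurable J"
    by (intro borel_measurable_sum borel_measurable_times borel_measurable_const)
  then have "(\<lambda>x. exp ((\<Sum>l\<in>L. \<eta> l * T l x (y k)) + a)) \<in> borel_measurable J"
    by measurable
  moreover have "exp (f (y k) x) = exp ((\<Sum>l\<in>L. \<eta> l * T l x (y k)) + a)" if "x \<in> space J" for x
    using f_eq y_in k that by simp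
  ultimately show "(\<lambda>x. exp (f (y k) x)) \<in> borel_measurable J"
    by (simp cong: measurable_cong)
qed simp

theorem mainTheorem19:
  fixes J :: "'x measure" and \<psi> :: "'y measure" and q :: "nat \<Rightarrow> nat \<Rightarrow> real"
    and n v :: nat and y :: "nat \<Rightarrow> 'y"
    and f :: "'y \<Rightarrow> 'x \<Rightarrow> 'th \<Rightarrow> real"
    and \<Theta> :: "'th set" and \<theta>old :: 'th and \<theta> :: 'th
    and \<eta> :: "'th \<Rightarrow> nat \<Rightarrow> real" and A :: "'th \<Rightarrow> real" and T :: "nat \<Rightarrow> 'x \<Rightarrow> 'y \<Rightarrow> real"
  defines "p \<equiv> (\<lambda>yy x. exp (f yy x \<theta>old))"
  defines "obar \<equiv> (\<lambda>l j i. integral\<^sup>L (cp_H q J p y n j i) (\<lambda>x. \<Sum>k=(max j 1)..i. T l x (y k)))"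
  defines "Obj \<equiv> (\<lambda>th. real n * A th + (\<Sum>l=1..v. \<eta> th l *
             ((\<Sum>i=1..n-1. \<Sum>j=0..i. cp_ctil q J p y n j i * cp_qtil q J p y n (i + 1) * obar l j i)
              + (\<Sum>j=0..n. cp_ctil q J p y n j n * obar l j n))))"
  defines "CondExp \<equiv> (\<lambda>th. integral\<^sup>L (cp_post q J p y n n) (\<lambda>\<omega>. \<Sum>i=1..n. f (y i) (cpX i \<omega>) th))"
  assumes n_pos: "n \<ge> 1"
    and J_prob: "prob_space J"
    and psi_sf: "sigma_finite_measure \<psi>"
    and y_in: "\<forall>k\<in>{1..n}. y k \<in> space \<psi>"
    and q_range: "\<forall>i j. j < i \<and> i \<le> n \<longrightarrow> 0 \<le> q j i \<and> q j i \<le> 1"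
    and \<theta>old_in: "\<theta>old \<in> \<Theta>"
    and T_meas: "\<forall>l\<in>{1..v}. (\<lambda>(x, yy). T l x yy) \<in> borel_measurable (J \<Otimes>\<^sub>M \<psi>)"
    and f_form: "\<forall>th\<in>\<Theta>. \<forall>x\<in>space J. \<forall>yy\<in>space \<psi>.
                   f yy x th = (\<Sum>l=1..v. \<eta> th l * T l x yy) + A th"
    and f_density: "\<forall>th\<in>\<Theta>. \<forall>x\<in>space J. (\<integral>\<^sup>+ yy. ennreal (exp (f yy x th)) \<partial>\<psi>) = 1"
    and seg_pos: "\<forall>j i. 0 < j \<and> j \<le> i \<and> i \<le> n \<longrightarrow>
                   0 < (\<integral>\<^sup>+ x. ennreal (\<Prod>l=j..i. p (y l) x) \<partial>J)"
    and seg_fin: "\<forall>j i. 0 < j \<and> j \<le> i \<and> i \<le> n \<longrightarrow>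
                   (\<integral>\<^sup>+ x. ennreal (\<Prod>l=j..i. p (y l) x) \<partial>J) < \<infinity>"
    and int_H: "\<forall>l\<in>{1..v}. \<forall>i\<in>{1..n}. \<forall>j\<le>i. \<forall>k\<in>{(max j 1)..i}.
                   integrable (cp_H q J p y n j i) (\<lambda>x. T l x (y k))"
    and int_post: "\<forall>l\<in>{1..v}. \<forall>i\<in>{1..n}.
                   integrable (cp_post q J p y n n) (\<lambda>\<omega>. T l (cpX i \<omega>) (y i))"
    and \<theta>_in: "\<theta> \<in> \<Theta>"
    and \<theta>_max: "\<forall>th\<in>\<Theta>. Obj th \<le> Obj \<theta>"
  shows "\<forall>th\<in>\<Theta>. CondExp th \<le> CondExp \<theta>"
proof -
  interpret cp_model q n J p y
    using bspec[OF f_form \<theta>old_in] seg_fin unfolding p_def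
    by (intro cp_model_exp_family[OF q_range J_prob n_pos y_in T_meas]) auto
  show ?thesis
  proof (cases "evidence n = 0")
    case True
    then show ?thesis by (simp add: CondExp_def post_null)
  next
    case False
    then have ev: "0 < evidence n" by (simp add: evidence_def zero_less_measure_iff order_less_le)
    have "CondExp th = Obj th" if th: "th \<in> \<Theta>" for th
      unfolding CondExp_def Obj_def obar_def
    proof (rule integral_post_affine_statistics[where g="\<lambda>z x. f z x th", OF ev])
      fix x k assume "x \<in> space J" "k \<in> {1..n}"
      then show "f (y k) x th = (\<Sum>l=1..v. \<eta> th l * T l x (y k)) + A th"
        using f_form th y_in by blast
    next
      fix l k assume "l \<in> {1..v}" "k \<in> {1..n}"
      then show "(\<lambda>x. T l x (y k)) \<in> borel_measurable J"
        using measurable_section[OF T_meas[rule_format, of l] bspec[OF y_in, of k]] by blast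
    qed (use int_post in auto)
    then show ?thesis using \<theta>_max \<theta>_in by simp
  qed
qed

end
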